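(* Let $\alpha\in\mathbb N^n$ and let $P\subset\mathbb Z^n_+$ be a discrete polymatroid. If the toric ideal $I_P$ is generated by quadratic binomials corresponding to double swaps, then $I_{P^\alpha}$ is also generated by quadratic binomials corresponding to double swaps.
   Context: $K$ is a field, $\mathbb N$ the positive integers, $\mathbb Z^n_+$ the nonnegative integer vectors; $\mathbf u\preceq\mathbf v$ means componentwise $\le$, $\epsilon_i$ is the $i$th unit vector, $|\mathbf u|=\sum_i\mathbf u(i)$. A discrete polymatroid on $[n]$ is a nonempty finite set $P\subset\mathbb Z^n_+$ such that (D1) if $\mathbf v\in\mathbb Z^n_+$, $\mathbf v\preceq\mathbf u$ for some $\mathbf u\in P$, then $\mathbf v\in P$; (D2) if $\mathbf u,\mathbf v\in P$ with $|\mathbf u|<|\mathbf v|$ then there is $i$ with $\mathbf u(i)<\mathbf v(i)$ and $\mathbf u+\epsilon_i\in P$. A base of $P$ is a $\preceq$-maximal element; $\mathcal B_P$ is the set of bases. $S_P=K[y_{\mathbf u}:\mathbf u\in\mathcal B_P]$, $K[P]=K[\mathbf x^{\mathbf u}:\mathbf u\in\mathcal B_P]$ with $\mathbf x^{\mathbf u}=x_1^{\mathbf u(1)}\cdots x_n^{\mathbf u(n)}$, and $I_P=\ker(S_P\to K[P],\ y_{\mathbf u}\mapsto\mathbf x^{\mathbf u})$. A pair of bases $(\mathbf v_1,\mathbf v_2)$ is obtained from a pair of bases $(\mathbf u_1,\mathbf u_2)$ by a double swap if $\mathbf v_1=\mathbf u_1+\epsilon_j-\epsilon_i$ and $\mathbf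 v_2=\mathbf u_2+\epsilon_i-\epsilon_j$ for some $i,j$ with $\mathbf u_1(i)>\mathbf u_2(i)$ and $\mathbf u_2(j)>\mathbf u_1(j)$; the corresponding quadratic binomial is $y_{\mathbf u_1}y_{\mathbf u_2}-y_{\mathbf v_1}y_{\mathbf v_2}$. For $\alpha=(k_1,\ldots,k_n)$, index coordinates of $\mathbb Z^{|\alpha|}$ by pairs $(i,j)$, $1\le j\le k_i$, let $\pi_0:\mathbb Z^{|\alpha|}\to\mathbb Z^n$, $\pi_0(\mathbf w)(i)=\sum_j\mathbf w(i,j)$, and for $\mathbf u\in\mathbb Z^n_+$ let $\mathbf u^\alpha=\{\mathbf w\in\mathbb Z^{|\alpha|}_+:\pi_0(\mathbf w)=\mathbf u\}$. $P^\alpha\subset\mathbb Z^{|\alpha|}_+$ is the discrete polymatroid with set of bases $\mathcal B_{P^\alpha}=\bigcup_{\mathbf u\in\mathcal B_P}\mathbf u^\alpha$, and $I_{P^\alpha}$ is its toric ideal defined analogously. *)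

theory Defs
  imports Main "HOL-Library.Poly_Mapping"
begin

(* Vectors in Z^n_+ are finitely supported functions 'i \<Rightarrow>\<^sub>0 nat whose support
  lies in a ground set E. Componentwise order is written via Poly_Mapping.lookup. *)

definition unit_vec :: "'i \<Rightarrow> ('i \<Rightarrow>\<^sub>0 nat)" where
  "unit_vec i = Poly_Mapping.single i 1"

definition vec_size :: "('i \<Rightarrow>\<^sub>0 nat) \<Rightarrow> nat" where
  "vec_size u = (\<Sum>i\<in>Poly_Mapping.keys u. Poly_Mapping.lookup u i)"

definition discrete_polymatroid :: "'i set \<Rightarrow> ('i \<Rightarrow>\<^sub>0 nat) set \<Rightarrow> bool" where
  "discrete_polymatroid E P \<longleftrightarrow>
     P \<noteq> {} \<and> finite P \<and> (\<forall>u\<in>P. Poly_Mapping.keys u \<subseteq> E) \<and>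
     (\<forall>u\<in>P. \<forall>v. Poly_Mapping.keys v \<subseteq> E \<and> (\<forall>i. Poly_Mapping.lookup v i \<le> Poly_Mapping.lookup u i) \<longrightarrow> v \<in> P) \<and>
     (\<forall>u\<in>P. \<forall>v\<in>P. vec_size u < vec_size v \<longrightarrow>
        (\<exists>i. Poly_Mapping.lookup u i < Poly_Mapping.lookup v i \<and> u + unit_vec i \<in> P))"

definition bases :: "('i \<Rightarrow>\<^sub>0 nat) set \<Rightarrow> ('i \<Rightarrow>\<^sub>0 nat) set" where
  "bases P = {u\<in>P. \<forall>v\<in>P. (\<forall>i. Poly_Mapping.lookup u i \<le> Poly_Mapping.lookup v i) \<longrightarrow> v = u}"

(* Polynomials over K in variables y_u (u a vector): monomials are
  ('i =>0 nat) =>0 nat, polynomials are finitely supported maps from monomials to K. *)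

type_synonym ('i,'k) ypoly = "(('i \<Rightarrow>\<^sub>0 nat) \<Rightarrow>\<^sub>0 nat) \<Rightarrow>\<^sub>0 'k"

definition yvar :: "('i \<Rightarrow>\<^sub>0 nat) \<Rightarrow> ('i,'k::comm_ring_1) ypoly" where
  "yvar u = Poly_Mapping.single (Poly_Mapping.single u 1) 1"

definition xmono :: "('i \<Rightarrow>\<^sub>0 nat) \<Rightarrow> ('i \<Rightarrow>\<^sub>0 nat) \<Rightarrow>\<^sub>0 'k::comm_ring_1" where
  "xmono u = Poly_Mapping.single u 1"

definition poly_ring :: "('i \<Rightarrow>\<^sub>0 nat) set \<Rightarrow> ('i,'k::comm_ring_1) ypoly set" where
  "poly_ring B = {p. \<forall>m\<in>Poly_Mapping.keys p. Poly_Mapping.keys m \<subseteq> B}"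

(* The K-algebra homomorphism y_u \<mapsto> x^u (evaluation of p). *)
definition toric_map :: "('i,'k::comm_ring_1) ypoly \<Rightarrow> ('i \<Rightarrow>\<^sub>0 nat) \<Rightarrow>\<^sub>0 'k" where
  "toric_map p = (\<Sum>m\<in>Poly_Mapping.keys p. Poly_Mapping.single 0 (Poly_Mapping.lookup p m) *
                     (\<Prod>u\<in>Poly_Mapping.keys m. (xmono u) ^ (Poly_Mapping.lookup m u)))"

definition toric_ideal :: "('i \<Rightarrow>\<^sub>0 nat) set \<Rightarrow> ('i,'k::comm_ring_1) ypoly set" where
  "toric_ideal B = {p \<in> poly_ring B. toric_map p = 0}"

definition gen_ideal :: "'a::comm_ring_1 set \<Rightarrow> 'a set \<Rightarrow> 'a set" where
  "gen_ideal R G = {p. \<exists>F r. finite F \<and> F \<subseteq> G \<and> (\<forall>g\<in>F. r g \<in> R) \<and> p = (\<Sum>g\<in>F. r g * g)}"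

definition double_swap :: "('i \<Rightarrow>\<^sub>0 nat) set \<Rightarrow> ('i \<Rightarrow>\<^sub>0 nat) \<Rightarrow> ('i \<Rightarrow>\<^sub>0 nat)
     \<Rightarrow> ('i \<Rightarrow>\<^sub>0 nat) \<Rightarrow> ('i \<Rightarrow>\<^sub>0 nat) \<Rightarrow> bool" where
  "double_swap B u1 u2 v1 v2 \<longleftrightarrow> u1 \<in> B \<and> u2 \<in> B \<and> v1 \<in> B \<and> v2 \<in> B \<and>
     (\<exists>i j. Poly_Mapping.lookup u1 i > Poly_Mapping.lookup u2 i \<and> Poly_Mapping.lookup u2 j > Poly_Mapping.lookup u1 j \<and>
            v1 + unit_vec i = u1 + unit_vec j \<and> v2 + unit_vec j = u2 + unit_vec i)"

definition double_swap_binomials :: "('i \<Rightarrow>\<^sub>0 nat) set \<Rightarrow> ('i,'k::comm_ring_1) ypoly set" where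
  "double_swap_binomials B =
     {yvar u1 * yvar u2 - yvar v1 * yvar v2 | u1 u2 v1 v2. double_swap B u1 u2 v1 v2}"

definition generated_by_double_swaps :: "('i \<Rightarrow>\<^sub>0 nat) set \<Rightarrow> 'k::field itself \<Rightarrow> bool" where
  "generated_by_double_swaps B (_::'k itself) \<longleftrightarrow>
     (toric_ideal B :: ('i,'k) ypoly set) = gen_ideal (poly_ring B) (double_swap_binomials B)"

definition lift_ground :: "nat \<Rightarrow> (nat \<Rightarrow> nat) \<Rightarrow> (nat \<times> nat) set" where
  "lift_ground n \<alpha> = {(i,j). 1 \<le> i \<and> i \<le> n \<and> 1 \<le> j \<and> j \<le> \<alpha> i}"

definition lift_vec :: "nat \<Rightarrow> (nat \<Rightarrow> nat) \<Rightarrow> (nat \<Rightarrow>\<^sub>0 nat) \<Rightarrow> ((nat \<times> nat) \<Rightarrow>\<^sub>0 nat) set" where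
  "lift_vec n \<alpha> u = {w. Poly_Mapping.keys w \<subseteq> lift_ground n \<alpha> \<and>
       (\<forall>i\<in>{1..n}. (\<Sum>j\<in>{1..\<alpha> i}. Poly_Mapping.lookup w (i,j)) = Poly_Mapping.lookup u i)}"

definition lift_bases :: "nat \<Rightarrow> (nat \<Rightarrow> nat) \<Rightarrow> (nat \<Rightarrow>\<^sub>0 nat) set \<Rightarrow> ((nat \<times> nat) \<Rightarrow>\<^sub>0 nat) set" where
  "lift_bases n \<alpha> P = (\<Union>u\<in>bases P. lift_vec n \<alpha> u)"

end

theory Submission
  imports Defs "HOL-Library.Multiset"
begin

text \<open>A monomial \<open>y\<^sup>M\<close> in the variables \<open>y\<^sub>u\<close> is indexed by the multiset \<open>M\<close> of its
  variables, and the toric map sends it to \<open>x\<^bsup>\<Sum>M\<^esup>\<close>. The toric ideal is spanned by the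
  binomials \<open>y\<^sup>M - y\<^sup>N\<close> with \<open>\<Sum>M = \<Sum>N\<close>, and such a binomial lies in the ideal generated
  by the double-swap binomials iff \<open>N\<close> is reachable from \<open>M\<close> by double swaps (a coefficient
  sum over a connected component separates the components). So the hypothesis and the claim say
  that any two multisets of bases with the same coordinate sum are connected by double swaps.

  To connect two multisets of lifted bases, project them by \<open>\<pi>\<^sub>0\<close> and lift a connecting
  path of the projections step by step. What remains is to connect two multisets of lifted bases
  with the same projections and the same sum; there every discrepancy inside a block
  \<open>{(i, 1), \<dots>, (i, \<alpha> i)}\<close> is repaired by moving one unit inside the block, which is a
  composition of at most two double swaps thanks to the symmetric exchange property of the bases
  of a discrete polymatroid.\<close>

abbreviation (input) lookup where "lookup \<equiv> Poly_Mapping.lookup"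
abbreviation (input) keys where "keys \<equiv> Poly_Mapping.keys"

section \<open>Toric ideals and swap moves\<close>

lemma single_sum: "Poly_Mapping.single k (\<Sum>x\<in>S. f x) = (\<Sum>x\<in>S. Poly_Mapping.single k (f x))"
  by (induction S rule: infinite_finite_induct) (simp_all add: single_add)

lemma poly_mapping_sum_single:
  "(\<Sum>m\<in>keys p. Poly_Mapping.single m (lookup p m)) = (p :: 'a \<Rightarrow>\<^sub>0 'b::comm_monoid_add)"
  by (rule poly_mapping_eqI) (auto simp: lookup_sum lookup_single when_def in_keys_iff)

definition monom_of_mset :: "'a multiset \<Rightarrow> 'a \<Rightarrow>\<^sub>0 nat" where
  "monom_of_mset M = Abs_poly_mapping (count M)"

definition mset_of_monom :: "('a \<Rightarrow>\<^sub>0 nat) \<Rightarrow> 'a multiset" where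
  "mset_of_monom m = Abs_multiset (lookup m)"

lemma lookup_monom_of_mset [simp]: "lookup (monom_of_mset M) = count M"
proof -
  have "{x. count M x \<noteq> 0} = set_mset M" by auto
  then show ?thesis unfolding monom_of_mset_def by simp
qed

lemma count_mset_of_monom [simp]: "count (mset_of_monom m) = lookup m"
proof -
  have "finite {x. lookup m x > 0}" using finite_lookup[of m] by (simp add: gr0_conv_Suc)
  then show ?thesis unfolding mset_of_monom_def by (rule count_Abs_multiset)
qed

lemma monom_of_mset_of_monom [simp]: "monom_of_mset (mset_of_monom m) = m"
  by (rule poly_mapping_eqI) simp

lemma mset_of_monom_of_mset [simp]: "mset_of_monom (monom_of_mset M) = M"
  by (simp add: multiset_eq_iff)

lemma set_mset_of_monom [simp]: "set_mset (mset_of_monom m) = keys m"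
  by (auto simp: in_keys_iff simp flip: count_greater_zero_iff)

lemma keys_monom_of_mset [simp]: "keys (monom_of_mset M) = set_mset M"
  by (auto simp: in_keys_iff)

lemma monom_of_mset_add: "monom_of_mset (M + N) = monom_of_mset M + monom_of_mset N"
  by (rule poly_mapping_eqI) (simp add: lookup_add)

lemma mset_of_monom_add: "mset_of_monom (m + m') = mset_of_monom m + mset_of_monom m'"
  by (simp add: multiset_eq_iff lookup_add)

definition ymonomial :: "('i \<Rightarrow>\<^sub>0 nat) multiset \<Rightarrow> ('i,'k::comm_ring_1) ypoly" where
  "ymonomial M = Poly_Mapping.single (monom_of_mset M) 1"

lemma ymonomial_add: "ymonomial (M + N) = (ymonomial M * ymonomial N :: ('i,'k::comm_ring_1) ypoly)"
  by (simp add: ymonomial_def monom_of_mset_add mult_single)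

lemma yvar_mult_yvar: "(yvar u * yvar v :: ('i,'k::comm_ring_1) ypoly) = ymonomial {#u, v#}"
proof -
  have "yvar w = (ymonomial {#w#} :: ('i,'k) ypoly)" for w
    unfolding yvar_def ymonomial_def
    by (rule arg_cong[of _ _ "\<lambda>m. Poly_Mapping.single m 1"], rule poly_mapping_eqI)
      (simp add: lookup_single when_def)
  then show ?thesis by (simp add: add_mset_commute flip: ymonomial_add)
qed

lemma prod_mset_xmono: "prod_mset (image_mset xmono M) = (xmono (sum_mset M) :: _ \<Rightarrow>\<^sub>0 'k::comm_ring_1)"
  by (induction M) (simp_all add: xmono_def mult_single)

lemma toric_map_eq:
  "toric_map (p :: ('i,'k::comm_ring_1) ypoly) =
     (\<Sum>m\<in>keys p. Poly_Mapping.single (sum_mset (mset_of_monom m)) (lookup p m))"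
proof -
  have prod_eq: "(\<Prod>u\<in>keys m. xmono u ^ lookup m u) =
      (xmono (sum_mset (mset_of_monom m)) :: _ \<Rightarrow>\<^sub>0 'k)" for m
    using image_prod_mset_multiplicity[of xmono "mset_of_monom m", symmetric]
    by (simp add: prod_mset_xmono)
  show ?thesis unfolding toric_map_def prod_eq by (simp add: xmono_def mult_single)
qed

lemma toric_map_single:
  "toric_map (Poly_Mapping.single m c :: ('i,'k::comm_ring_1) ypoly) =
     Poly_Mapping.single (sum_mset (mset_of_monom m)) c"
  by (simp add: toric_map_eq)

lemma toric_map_ymonomial: "toric_map (ymonomial M :: ('i,'k::comm_ring_1) ypoly) = xmono (sum_mset M)"
  by (simp add: ymonomial_def toric_map_single xmono_def)

lemma lookup_toric_map:
  "lookup (toric_map (p :: ('i,'k::comm_ring_1) ypoly)) e =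
     (\<Sum>m\<in>{m\<in>keys p. sum_mset (mset_of_monom m) = e}. lookup p m)"
  by (simp add: toric_map_eq lookup_sum lookup_single when_def sum.inter_filter)

lemma toric_map_zero [simp]: "toric_map 0 = 0"
  by (simp add: toric_map_eq)

lemma toric_map_add: "toric_map (p + q :: ('i,'k::comm_ring_1) ypoly) = toric_map p + toric_map q"
  unfolding toric_map_eq by (rule setsum_keys_plus_distrib) (simp_all add: single_add)

lemma toric_map_sum: "toric_map (\<Sum>x\<in>S. f x :: ('i,'k::comm_ring_1) ypoly) = (\<Sum>x\<in>S. toric_map (f x))"
  by (induction S rule: infinite_finite_induct) (simp_all add: toric_map_add)

lemma toric_map_diff: "toric_map (p - q :: ('i,'k::comm_ring_1) ypoly) = toric_map p - toric_map q"
  using toric_map_add[of "p - q" q] by (simp add: algebra_simps)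

lemma toric_map_mult: "toric_map (p * q :: ('i,'k::comm_ring_1) ypoly) = toric_map p * toric_map q"
proof -
  let ?d = "\<lambda>m. sum_mset (mset_of_monom m)"
  have "toric_map (p * q) = toric_map ((\<Sum>m\<in>keys p. Poly_Mapping.single m (lookup p m)) *
                                      (\<Sum>m'\<in>keys q. Poly_Mapping.single m' (lookup q m')))"
    by (simp only: poly_mapping_sum_single)
  also have "\<dots> = (\<Sum>m\<in>keys p. \<Sum>m'\<in>keys q.
      Poly_Mapping.single (?d m + ?d m') (lookup p m * lookup q m'))"
    by (simp add: sum_product mult_single toric_map_sum toric_map_single mset_of_monom_add)
  also have "\<dots> = toric_map p * toric_map q"
    by (simp add: toric_map_eq sum_product mult_single)
  finally show ?thesis .
qed

lemma poly_ring_zero: "0 \<in> poly_ring B"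
  by (simp add: poly_ring_def)

lemma poly_ring_add: "p \<in> poly_ring B \<Longrightarrow> q \<in> poly_ring B \<Longrightarrow> p + q \<in> poly_ring B"
  unfolding poly_ring_def using keys_add[of p q] by blast

lemma poly_ring_uminus: "p \<in> poly_ring B \<Longrightarrow> - p \<in> poly_ring B"
  unfolding poly_ring_def by simp

lemma poly_ring_diff: "p \<in> poly_ring B \<Longrightarrow> q \<in> poly_ring B \<Longrightarrow> p - q \<in> poly_ring B"
  using poly_ring_add[of p B "- q"] by (simp add: poly_ring_uminus)

lemma poly_ring_mult:
  assumes "p \<in> poly_ring B" "q \<in> poly_ring B"
  shows "p * q \<in> poly_ring B"
  unfolding poly_ring_def
proof (rule CollectI, rule ballI)
  fix m assume "m \<in> keys (p * q)"
  then obtain a b where "m = a + b" "a \<in> keys p" "b \<in> keys q"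
    using keys_mult[of p q] by blast
  then show "keys m \<subseteq> B" using assms keys_add[of a b] unfolding poly_ring_def by blast
qed

lemma poly_ring_sum: "(\<And>x. x \<in> S \<Longrightarrow> f x \<in> poly_ring B) \<Longrightarrow> (\<Sum>x\<in>S. f x) \<in> poly_ring B"
  by (induction S rule: infinite_finite_induct) (simp_all add: poly_ring_zero poly_ring_add)

lemma poly_ring_single: "keys m \<subseteq> B \<Longrightarrow> Poly_Mapping.single m c \<in> poly_ring B"
  unfolding poly_ring_def by simp

lemma poly_ring_ymonomial: "set_mset M \<subseteq> B \<Longrightarrow> ymonomial M \<in> poly_ring B"
  unfolding ymonomial_def by (rule poly_ring_single) simp

lemma gen_ideal_zero: "0 \<in> gen_ideal R G"
  unfolding gen_ideal_def by (rule CollectI, rule exI[of _ "{}"]) simp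

lemma gen_ideal_generator: "g \<in> G \<Longrightarrow> r \<in> R \<Longrightarrow> r * g \<in> gen_ideal R G"
  unfolding gen_ideal_def by (rule CollectI, rule exI[of _ "{g}"], rule exI[of _ "\<lambda>_. r"]) simp

lemma gen_ideal_add:
  assumes "p \<in> gen_ideal (poly_ring B) G" "q \<in> gen_ideal (poly_ring B) G"
  shows "p + q \<in> gen_ideal (poly_ring B) G"
proof -
  obtain F r where F: "finite F" "F \<subseteq> G" "\<forall>g\<in>F. r g \<in> poly_ring B" "p = (\<Sum>g\<in>F. r g * g)"
    using assms(1) unfolding gen_ideal_def by blast
  obtain F' r' where F': "finite F'" "F' \<subseteq> G" "\<forall>g\<in>F'. r' g \<in> poly_ring B" "q = (\<Sum>g\<in>F'. r' g * g)"
    using assms(2) unfolding gen_ideal_def by blast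
  define s where "s g = (if g \<in> F then r g else 0) + (if g \<in> F' then r' g else 0)" for g
  have "(\<Sum>g\<in>F \<union> F'. s g * g) =
      (\<Sum>g\<in>F \<union> F'. if g \<in> F then r g * g else 0) + (\<Sum>g\<in>F \<union> F'. if g \<in> F' then r' g * g else 0)"
    unfolding s_def sum.distrib[symmetric] by (intro sum.cong refl) (simp add: distrib_right)
  also have "\<dots> = p + q"
    using F F' by (simp add: sum.inter_restrict[symmetric] Int_absorb1)
  finally have "p + q = (\<Sum>g\<in>F \<union> F'. s g * g)" ..
  moreover have "\<forall>g\<in>F \<union> F'. s g \<in> poly_ring B"
    using F F' unfolding s_def by (auto intro!: poly_ring_add poly_ring_zero)
  ultimately show ?thesis
    unfolding gen_ideal_def using F(1,2) F'(1,2) by (intro CollectI exI[of _ "F \<union> F'"] exI[of _ s]) auto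
qed

lemma gen_ideal_mult:
  assumes "p \<in> gen_ideal (poly_ring B) G" "s \<in> poly_ring B"
  shows "s * p \<in> gen_ideal (poly_ring B) G"
proof -
  obtain F r where F: "finite F" "F \<subseteq> G" "\<forall>g\<in>F. r g \<in> poly_ring B" "p = (\<Sum>g\<in>F. r g * g)"
    using assms(1) unfolding gen_ideal_def by blast
  then have "s * p = (\<Sum>g\<in>F. (s * r g) * g)" by (simp add: sum_distrib_left mult.assoc)
  moreover have "\<forall>g\<in>F. s * r g \<in> poly_ring B" using F(3) assms(2) by (auto intro: poly_ring_mult)
  ultimately show ?thesis
    unfolding gen_ideal_def using F(1,2) by (intro CollectI exI[of _ F] exI[of _ "\<lambda>g. s * r g"]) auto
qed

lemma gen_ideal_uminus: "p \<in> gen_ideal (poly_ring B) G \<Longrightarrow> - p \<in> gen_ideal (poly_ring B) G"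
  using gen_ideal_mult[of p B G "- 1"] by (simp add: poly_ring_def)

lemma gen_ideal_sum:
  "(\<And>x. x \<in> S \<Longrightarrow> f x \<in> gen_ideal (poly_ring B) G) \<Longrightarrow> (\<Sum>x\<in>S. f x) \<in> gen_ideal (poly_ring B) G"
  by (induction S rule: infinite_finite_induct) (simp_all add: gen_ideal_zero gen_ideal_add)

lemma double_swap_add_eq: "double_swap B u1 u2 v1 v2 \<Longrightarrow> u1 + u2 = v1 + v2"
proof -
  assume "double_swap B u1 u2 v1 v2"
  then obtain i j where e: "v1 + unit_vec i = u1 + unit_vec j" "v2 + unit_vec j = u2 + unit_vec i"
    unfolding double_swap_def by blast
  have "(v1 + v2) + (unit_vec i + unit_vec j) = (u1 + u2) + (unit_vec i + unit_vec j)"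
    using arg_cong2[OF e, of "(+)"] by (simp add: ac_simps)
  then show ?thesis by simp
qed

lemma double_swap_binomial_eq:
  "(yvar u1 * yvar u2 - yvar v1 * yvar v2 :: ('i,'k::comm_ring_1) ypoly) =
     ymonomial {#u1, u2#} - ymonomial {#v1, v2#}"
  by (simp add: yvar_mult_yvar)

lemma ymonomial_diff_in_toric_ideal:
  assumes "set_mset M \<subseteq> B" "set_mset N \<subseteq> B" "sum_mset M = sum_mset N"
  shows "(ymonomial M - ymonomial N :: ('i,'k::comm_ring_1) ypoly) \<in> toric_ideal B"
  using assms unfolding toric_ideal_def
  by (simp add: toric_map_diff toric_map_ymonomial poly_ring_diff poly_ring_ymonomial)

lemma double_swap_binomials_subset_toric_ideal:
  "double_swap_binomials B \<subseteq> (toric_ideal B :: ('i,'k::comm_ring_1) ypoly set)"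
proof
  fix g :: "('i,'k) ypoly"
  assume "g \<in> double_swap_binomials B"
  then obtain u1 u2 v1 v2 where ds: "double_swap B u1 u2 v1 v2"
    and g: "g = ymonomial {#u1, u2#} - ymonomial {#v1, v2#}"
    unfolding double_swap_binomials_def double_swap_binomial_eq by blast
  have "{u1, u2, v1, v2} \<subseteq> B" using ds unfolding double_swap_def by blast
  then show "g \<in> toric_ideal B"
    unfolding g by (intro ymonomial_diff_in_toric_ideal) (simp_all add: double_swap_add_eq[OF ds])
qed

lemma gen_ideal_subset_toric_ideal:
  assumes "G \<subseteq> toric_ideal B"
  shows "gen_ideal (poly_ring B) G \<subseteq> (toric_ideal B :: ('i,'k::comm_ring_1) ypoly set)"
proof
  fix p :: "('i,'k) ypoly"
  assume "p \<in> gen_ideal (poly_ring B) G"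
  then obtain F r where F: "finite F" "F \<subseteq> G" "\<forall>g\<in>F. r g \<in> poly_ring B" "p = (\<Sum>g\<in>F. r g * g)"
    unfolding gen_ideal_def by blast
  have "\<forall>g\<in>F. g \<in> poly_ring B \<and> toric_map g = 0" using F(2) assms unfolding toric_ideal_def by blast
  then show "p \<in> toric_ideal B"
    unfolding toric_ideal_def using F(3,4)
    by (auto intro!: poly_ring_sum poly_ring_mult simp: toric_map_sum toric_map_mult)
qed

text \<open>Grouping the monomials of a kernel element by their image and subtracting a fixed
  representative of each group writes it as a combination of binomials; the representatives
  cancel because the coefficients in each group sum to zero.\<close>

lemma toric_ideal_subset_gen_ideal:
  assumes binomials: "\<And>M N. set_mset M \<subseteq> B \<Longrightarrow> set_mset N \<subseteq> B \<Longrightarrow> sum_mset M = sum_mset N \<Longrightarrow>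
      ymonomial M - ymonomial N \<in> gen_ideal (poly_ring B) G"
  shows "toric_ideal B \<subseteq> (gen_ideal (poly_ring B) G :: ('i,'k::comm_ring_1) ypoly set)"
proof
  fix p :: "('i,'k) ypoly"
  assume p: "p \<in> toric_ideal B"
  define deg :: "(('i \<Rightarrow>\<^sub>0 nat) \<Rightarrow>\<^sub>0 nat) \<Rightarrow> ('i \<Rightarrow>\<^sub>0 nat)"
    where "deg m = sum_mset (mset_of_monom m)" for m
  define c where "c m = (Poly_Mapping.single 0 (lookup p m) :: ('i,'k) ypoly)" for m
  define rep where "rep e = (SOME m. m \<in> keys p \<and> deg m = e)" for e
  define y where "y m = (ymonomial (mset_of_monom m) :: ('i,'k) ypoly)" for m
  have rep: "rep (deg m) \<in> keys p \<and> deg (rep (deg m)) = deg m" if "m \<in> keys p" for m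
    unfolding rep_def by (rule someI[of _ m]) (use that in simp)
  have in_B: "keys m \<subseteq> B" if "m \<in> keys p" for m
    using p that unfolding toric_ideal_def poly_ring_def by blast
  have fibre_sum: "(\<Sum>m\<in>{m\<in>keys p. deg m = e}. lookup p m) = 0" for e
    using p lookup_toric_map[of p e] unfolding toric_ideal_def deg_def by simp
  have "(\<Sum>m\<in>keys p. c m * y (rep (deg m))) =
      (\<Sum>e\<in>deg ` keys p. \<Sum>m\<in>{m\<in>keys p. deg m = e}. c m * y (rep (deg m)))"
    by (rule sum.image_gen) simp
  also have "\<dots> = (\<Sum>e\<in>deg ` keys p. \<Sum>m\<in>{m\<in>keys p. deg m = e}. c m * y (rep e))"
    by (auto intro!: sum.cong)
  also have "\<dots> = (\<Sum>e\<in>deg ` keys p.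
      Poly_Mapping.single 0 (\<Sum>m\<in>{m\<in>keys p. deg m = e}. lookup p m) * y (rep e))"
    unfolding c_def by (simp add: sum_distrib_right single_sum)
  finally have reps_cancel: "(\<Sum>m\<in>keys p. c m * y (rep (deg m))) = 0"
    by (simp add: fibre_sum)
  have "p = (\<Sum>m\<in>keys p. c m * y m)"
    unfolding c_def y_def ymonomial_def by (simp add: mult_single poly_mapping_sum_single)
  also have "\<dots> = (\<Sum>m\<in>keys p. c m * (y m - y (rep (deg m))))"
    using reps_cancel by (simp add: right_diff_distrib sum_subtractf)
  also have "\<dots> \<in> gen_ideal (poly_ring B) G"
  proof (intro gen_ideal_sum gen_ideal_mult)
    fix m assume m: "m \<in> keys p"
    show "y m - y (rep (deg m)) \<in> gen_ideal (poly_ring B) G"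
      unfolding y_def using rep[OF m] in_B[OF m] in_B[of "rep (deg m)"]
      by (intro binomials) (auto simp: deg_def)
    show "c m \<in> poly_ring B" unfolding c_def by (rule poly_ring_single) simp
  qed
  finally show "p \<in> gen_ideal (poly_ring B) G" .
qed

abbreviation double_swap_ideal :: "('i \<Rightarrow>\<^sub>0 nat) set \<Rightarrow> ('i,'k::comm_ring_1) ypoly set" where
  "double_swap_ideal B \<equiv> gen_ideal (poly_ring B) (double_swap_binomials B)"

definition swap_move :: "('i \<Rightarrow>\<^sub>0 nat) set \<Rightarrow> ('i \<Rightarrow>\<^sub>0 nat) multiset \<Rightarrow> ('i \<Rightarrow>\<^sub>0 nat) multiset \<Rightarrow> bool"
  where "swap_move B M N \<longleftrightarrow>
    (\<exists>T u1 u2 v1 v2. double_swap B u1 u2 v1 v2 \<and> M = T + {#u1, u2#} \<and> N = T + {#v1, v2#})"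

definition swap_connected :: "('i \<Rightarrow>\<^sub>0 nat) set \<Rightarrow> bool" where
  "swap_connected B \<longleftrightarrow> (\<forall>M N. set_mset M \<subseteq> B \<longrightarrow> set_mset N \<subseteq> B \<longrightarrow>
     sum_mset M = sum_mset N \<longrightarrow> equivclp (swap_move B) M N)"

lemma swap_move_double_swap: "double_swap B u1 u2 v1 v2 \<Longrightarrow> swap_move B {#u1, u2#} {#v1, v2#}"
  unfolding swap_move_def by (metis add_0)

lemma swap_move_add: "swap_move B M N \<Longrightarrow> swap_move B (T + M) (T + N)"
  unfolding swap_move_def by (metis add.assoc)

lemma equivclp_swap_move_add:
  "equivclp (swap_move B) M N \<Longrightarrow> equivclp (swap_move B) (T + M) (T + N)"
  by (induction rule: equivclp_induct) (auto intro: equivclp_into_equivclp swap_move_add)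

lemma swap_move_sum_mset: "swap_move B M N \<Longrightarrow> sum_mset M = sum_mset N"
  unfolding swap_move_def by (auto dest!: double_swap_add_eq simp flip: add.assoc)

lemma equivclp_swap_move_sum_mset: "equivclp (swap_move B) M N \<Longrightarrow> sum_mset M = sum_mset N"
  by (induction rule: equivclp_induct) (auto dest: swap_move_sum_mset)

lemma swap_move_set_mset: "swap_move B M N \<Longrightarrow> set_mset M \<subseteq> B \<longleftrightarrow> set_mset N \<subseteq> B"
  unfolding swap_move_def double_swap_def by auto

lemma equivclp_swap_move_set_mset:
  "equivclp (swap_move B) M N \<Longrightarrow> set_mset M \<subseteq> B \<Longrightarrow> set_mset N \<subseteq> B"
  by (induction rule: equivclp_induct) (auto dest: swap_move_set_mset)

lemma swap_move_binomial_in_gen_ideal: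
  assumes "swap_move B M N" "set_mset M \<subseteq> B"
  shows "(ymonomial M - ymonomial N :: ('i,'k::comm_ring_1) ypoly) \<in> double_swap_ideal B"
proof -
  obtain T u1 u2 v1 v2 where ds: "double_swap B u1 u2 v1 v2"
    and M: "M = T + {#u1, u2#}" and N: "N = T + {#v1, v2#}"
    using assms(1) unfolding swap_move_def by blast
  have "(yvar u1 * yvar u2 - yvar v1 * yvar v2 :: ('i,'k) ypoly) \<in> double_swap_binomials B"
    unfolding double_swap_binomials_def using ds by blast
  then have "ymonomial T * (ymonomial {#u1, u2#} - ymonomial {#v1, v2#} :: ('i,'k) ypoly)
      \<in> double_swap_ideal B"
    using assms(2) M by (auto intro!: gen_ideal_generator poly_ring_ymonomial
        simp: double_swap_binomial_eq)
  then show ?thesis unfolding M N ymonomial_add right_diff_distrib .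
qed

lemma equivclp_swap_move_imp_binomial_in_gen_ideal:
  assumes "equivclp (swap_move B) M N" "set_mset M \<subseteq> B"
  shows "(ymonomial M - ymonomial N :: ('i,'k::comm_ring_1) ypoly) \<in> double_swap_ideal B"
  using assms
proof (induction rule: equivclp_induct)
  case base
  then show ?case by (simp add: gen_ideal_zero)
next
  case (step N N')
  have N: "set_mset N \<subseteq> B" using equivclp_swap_move_set_mset[OF step.hyps(1) step.prems] .
  have "(ymonomial N - ymonomial N' :: ('i,'k) ypoly) \<in> double_swap_ideal B"
    using step.hyps(2)
  proof
    assume "swap_move B N N'"
    then show ?thesis using N by (rule swap_move_binomial_in_gen_ideal)
  next
    assume N': "swap_move B N' N"
    then have "set_mset N' \<subseteq> B" using N swap_move_set_mset by blast
    then show ?thesis using gen_ideal_uminus[OF swap_move_binomial_in_gen_ideal[OF N']] by simp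
  qed
  from gen_ideal_add[OF step.IH[OF step.prems] this] show ?case by simp
qed

definition coeff_sum :: "'m set \<Rightarrow> ('m \<Rightarrow>\<^sub>0 'k::comm_ring_1) \<Rightarrow> 'k" where
  "coeff_sum C p = (\<Sum>m\<in>keys p. if m \<in> C then lookup p m else 0)"

lemma coeff_sum_add: "coeff_sum C (p + q) = coeff_sum C p + coeff_sum C q"
  unfolding coeff_sum_def by (rule setsum_keys_plus_distrib) auto

lemma coeff_sum_zero [simp]: "coeff_sum C 0 = 0"
  by (simp add: coeff_sum_def)

lemma coeff_sum_diff: "coeff_sum C (p - q) = coeff_sum C p - coeff_sum C q"
  using coeff_sum_add[of C "p - q" q] by (simp add: algebra_simps)

lemma coeff_sum_sum: "coeff_sum C (\<Sum>x\<in>S. f x) = (\<Sum>x\<in>S. coeff_sum C (f x))"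
  by (induction S rule: infinite_finite_induct) (simp_all add: coeff_sum_add)

lemma coeff_sum_single: "coeff_sum C (Poly_Mapping.single m c) = (if m \<in> C then c else 0)"
  by (simp add: coeff_sum_def)

lemma coeff_sum_mult_binomial:
  fixes r :: "'m::comm_monoid_add \<Rightarrow>\<^sub>0 'k::comm_ring_1"
  assumes "\<And>t. t + a \<in> C \<longleftrightarrow> t + b \<in> C"
  shows "coeff_sum C (r * (Poly_Mapping.single a 1 - Poly_Mapping.single b 1)) = 0"
proof -
  have "coeff_sum C (r * Poly_Mapping.single s 1) =
      (\<Sum>t\<in>keys r. if t + s \<in> C then lookup r t else 0)" for s
    by (subst poly_mapping_sum_single[of r, symmetric])
      (simp add: sum_distrib_right mult_single coeff_sum_sum coeff_sum_single)
  then show ?thesis using assms by (simp add: right_diff_distrib coeff_sum_diff)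
qed

text \<open>The coefficient sum over a connected component of the swap graph vanishes on the
  ideal generated by the double-swap binomials, but not on \<open>y\<^sup>M - y\<^sup>N\<close> unless \<open>N\<close> lies
  in the component of \<open>M\<close>.\<close>

lemma binomial_in_gen_ideal_imp_equivclp_swap_move:
  assumes "(ymonomial M - ymonomial N :: ('i,'k::comm_ring_1) ypoly)
      \<in> gen_ideal R (double_swap_binomials B)"
  shows "equivclp (swap_move B) M N"
proof -
  define C where "C = {m. equivclp (swap_move B) M (mset_of_monom m)}"
  obtain F r where F: "F \<subseteq> double_swap_binomials B"
    "(ymonomial M - ymonomial N :: ('i,'k) ypoly) = (\<Sum>g\<in>F. r g * g)"
    using assms unfolding gen_ideal_def by blast
  have "coeff_sum C (r g * g) = 0" if "g \<in> F" for g
  proof -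
    obtain u1 u2 v1 v2 where ds: "double_swap B u1 u2 v1 v2"
      and g: "g = ymonomial {#u1, u2#} - ymonomial {#v1, v2#}"
      using \<open>g \<in> F\<close> F(1) unfolding double_swap_binomials_def double_swap_binomial_eq by blast
    have "swap_move B (mset_of_monom t + {#u1, u2#}) (mset_of_monom t + {#v1, v2#})" for t
      using swap_move_add[OF swap_move_double_swap[OF ds]] .
    then have "t + monom_of_mset {#u1, u2#} \<in> C \<longleftrightarrow> t + monom_of_mset {#v1, v2#} \<in> C" for t
      unfolding C_def by (auto simp: mset_of_monom_add intro: equivclp_into_equivclp)
    then show ?thesis unfolding g ymonomial_def by (rule coeff_sum_mult_binomial)
  qed
  then have "coeff_sum C (ymonomial M - ymonomial N :: ('i,'k) ypoly) = 0"
    unfolding F(2) coeff_sum_sum by simp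
  moreover have "monom_of_mset M \<in> C" unfolding C_def by simp
  ultimately have "monom_of_mset N \<in> C"
    by (auto simp: ymonomial_def coeff_sum_diff coeff_sum_single split: if_splits)
  then show ?thesis unfolding C_def by simp
qed

lemma generated_by_double_swaps_iff_swap_connected:
  fixes B :: "('i \<Rightarrow>\<^sub>0 nat) set" and K :: "'k::field itself"
  shows "generated_by_double_swaps B K \<longleftrightarrow> swap_connected B"
proof
  assume "generated_by_double_swaps B K"
  then have gen: "(toric_ideal B :: ('i,'k) ypoly set) = double_swap_ideal B"
    unfolding generated_by_double_swaps_def .
  show "swap_connected B" unfolding swap_connected_def
  proof (intro allI impI)
    fix M N assume "set_mset M \<subseteq> B" "set_mset N \<subseteq> B" "sum_mset M = sum_mset N"
    then have "(ymonomial M - ymonomial N :: ('i,'k) ypoly) \<in> double_swap_ideal B"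
      using ymonomial_diff_in_toric_ideal gen by blast
    then show "equivclp (swap_move B) M N" by (rule binomial_in_gen_ideal_imp_equivclp_swap_move)
  qed
next
  assume "swap_connected B"
  then have "toric_ideal B \<subseteq> (double_swap_ideal B :: ('i,'k) ypoly set)"
    unfolding swap_connected_def
    by (intro toric_ideal_subset_gen_ideal equivclp_swap_move_imp_binomial_in_gen_ideal) auto
  then show "generated_by_double_swaps B K"
    unfolding generated_by_double_swaps_def
    using gen_ideal_subset_toric_ideal[OF double_swap_binomials_subset_toric_ideal] by blast
qed

section \<open>Rank function and symmetric exchange\<close>

lemma lookup_unit_vec: "lookup (unit_vec i) j = (if i = j then 1 else 0)"
  by (simp add: unit_vec_def lookup_single when_def)

lemma keys_unit_vec [simp]: "keys (unit_vec i) = {i}"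
  by (simp add: unit_vec_def)

lemma diff_unit_vec_add: "1 \<le> lookup u i \<Longrightarrow> u - unit_vec i + unit_vec i = u"
  by (rule poly_mapping_eqI) (auto simp: lookup_add lookup_minus lookup_unit_vec)

lemma add_diff_cancel_pointwise_le:
  "(\<And>i. lookup q i \<le> lookup v i) \<Longrightarrow> q + (v - q) = (v :: 'i \<Rightarrow>\<^sub>0 nat)"
  by (rule poly_mapping_eqI) (simp add: lookup_add lookup_minus)

definition vec_size_on :: "'i set \<Rightarrow> ('i \<Rightarrow>\<^sub>0 nat) \<Rightarrow> nat" where
  "vec_size_on A x = (\<Sum>a\<in>A. lookup x a)"

lemma vec_size_on_add: "vec_size_on A (x + y) = vec_size_on A x + vec_size_on A y"
  by (simp add: vec_size_on_def lookup_add sum.distrib)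

lemma vec_size_on_unit_vec: "finite A \<Longrightarrow> vec_size_on A (unit_vec k) = (if k \<in> A then 1 else 0)"
  by (simp add: vec_size_on_def lookup_unit_vec)

lemma vec_size_on_mono: "(\<And>i. lookup x i \<le> lookup y i) \<Longrightarrow> vec_size_on A x \<le> vec_size_on A y"
  unfolding vec_size_on_def by (rule sum_mono)

lemma vec_size_eq_vec_size_on: "finite S \<Longrightarrow> keys u \<subseteq> S \<Longrightarrow> vec_size u = vec_size_on S u"
  unfolding vec_size_def vec_size_on_def
  by (rule sum.mono_neutral_left) (auto simp: in_keys_iff)

lemma vec_size_add: "vec_size (x + y) = vec_size x + vec_size y"
  unfolding vec_size_def by (rule setsum_keys_plus_distrib) auto

lemma vec_size_unit_vec [simp]: "vec_size (unit_vec i) = 1"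
  by (simp add: vec_size_def lookup_unit_vec)

lemma vec_size_zero [simp]: "vec_size 0 = 0"
  by (simp add: vec_size_def)

lemma vec_size_eq_0_iff: "vec_size x = 0 \<longleftrightarrow> x = 0"
  by (auto simp: vec_size_def in_keys_iff intro: poly_mapping_eqI)

lemma vec_size_mono: "(\<And>i. lookup x i \<le> lookup y i) \<Longrightarrow> vec_size x \<le> vec_size y"
proof -
  assume le: "\<And>i. lookup x i \<le> lookup y i"
  then have "keys x \<subseteq> keys y" by (metis in_keys_iff le_zero_eq subsetI)
  then show ?thesis
    using le by (simp add: vec_size_eq_vec_size_on[of "keys y"] vec_size_on_mono)
qed

lemma vec_size_eq_1_imp_unit_vec: "vec_size d = 1 \<Longrightarrow> \<exists>c. d = unit_vec c"
proof -
  assume d: "vec_size d = 1"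
  then have "d \<noteq> 0" by (auto simp: vec_size_eq_0_iff)
  then obtain c where c: "c \<in> keys d" by (metis keys_eq_empty ex_in_conv)
  have "lookup d c + (\<Sum>a\<in>keys d - {c}. lookup d a) = 1"
    using d c unfolding vec_size_def by (simp add: sum.remove)
  moreover have "lookup d c \<noteq> 0" using c by (simp add: in_keys_iff)
  ultimately have "lookup d c = 1" "(\<Sum>a\<in>keys d - {c}. lookup d a) = 0" by arith+
  then have dc: "lookup d c = 1" and rest: "\<forall>a\<in>keys d - {c}. lookup d a = 0" by simp_all
  have "lookup d a = lookup (unit_vec c) a" for a
  proof (cases "a = c")
    case False
    then have "lookup d a = 0" using rest by (metis DiffI in_keys_iff singletonD)
    then show ?thesis using False by (simp add: lookup_unit_vec)
  qed (simp add: dc lookup_unit_vec)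
  then have "d = unit_vec c" by (rule poly_mapping_eqI)
  then show ?thesis ..
qed

definition move_unit :: "('i \<Rightarrow>\<^sub>0 nat) \<Rightarrow> 'i \<Rightarrow> 'i \<Rightarrow> ('i \<Rightarrow>\<^sub>0 nat)" where
  "move_unit x p c = x - unit_vec p + unit_vec c"

lemma lookup_move_unit:
  "1 \<le> lookup x p \<Longrightarrow>
    lookup (move_unit x p c) z = lookup x z - (if p = z then 1 else 0) + (if c = z then 1 else 0)"
  by (simp add: move_unit_def lookup_add lookup_minus lookup_unit_vec)

lemma move_unit_add_unit_vec: "1 \<le> lookup x p \<Longrightarrow> move_unit x p c + unit_vec p = x + unit_vec c"
  by (rule poly_mapping_eqI) (auto simp: lookup_move_unit lookup_add lookup_unit_vec)

lemma keys_move_unit: "keys (move_unit x p c) \<subseteq> keys x \<union> {c}"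
  by (auto simp: in_keys_iff move_unit_def lookup_add lookup_minus lookup_unit_vec split: if_splits)

lemma move_unit_move_unit: "1 \<le> lookup x p \<Longrightarrow> p \<noteq> q \<Longrightarrow> move_unit (move_unit x p q) q c = move_unit x p c"
  by (rule poly_mapping_eqI) (auto simp: lookup_move_unit)

lemma move_unit_self: "1 \<le> lookup x p \<Longrightarrow> move_unit x p p = x"
  by (rule poly_mapping_eqI) (auto simp: lookup_move_unit)

lemma move_unit_add_move_unit:
  assumes "1 \<le> lookup x p" "1 \<le> lookup x' q"
  shows "move_unit x p q + move_unit x' q p = x + x'"
proof -
  have "(move_unit x p q + unit_vec p) + (move_unit x' q p + unit_vec q) =
      (x + unit_vec q) + (x' + unit_vec p)"
    using assms by (simp add: move_unit_add_unit_vec)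
  then have "(move_unit x p q + move_unit x' q p) + (unit_vec p + unit_vec q) =
      (x + x') + (unit_vec p + unit_vec q)"
    by (simp add: ac_simps)
  then show ?thesis by (rule add_right_imp_eq)
qed

lemma vec_size_move_unit: "1 \<le> lookup x p \<Longrightarrow> vec_size (move_unit x p c) = vec_size x"
  using arg_cong[OF move_unit_add_unit_vec[of x p c], of vec_size] by (simp add: vec_size_add)


definition restrict_vec :: "'i set \<Rightarrow> ('i \<Rightarrow>\<^sub>0 nat) \<Rightarrow> ('i \<Rightarrow>\<^sub>0 nat)" where
  "restrict_vec A x = Abs_poly_mapping (\<lambda>i. if i \<in> A then lookup x i else 0)"

lemma lookup_restrict_vec: "lookup (restrict_vec A x) i = (if i \<in> A then lookup x i else 0)"
proof -
  have "finite {i. (if i \<in> A then lookup x i else 0) \<noteq> 0}"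
    by (rule finite_subset[OF _ finite_lookup[of x]]) auto
  then show ?thesis unfolding restrict_vec_def by simp
qed

lemma keys_restrict_vec: "keys (restrict_vec A x) \<subseteq> A"
  by (auto simp: in_keys_iff lookup_restrict_vec split: if_splits)

lemma vec_size_on_restrict_vec: "finite B \<Longrightarrow> A \<subseteq> B \<Longrightarrow> vec_size_on B (restrict_vec A x) = vec_size_on A x"
  unfolding vec_size_on_def lookup_restrict_vec by (simp add: sum.If_cases Int_absorb1)

locale polymatroid =
  fixes E :: "'i set" and P :: "('i \<Rightarrow>\<^sub>0 nat) set"
  assumes finite_ground: "finite E" and is_polymatroid: "discrete_polymatroid E P"
begin

lemma P_nonempty: "P \<noteq> {}" and finite_P: "finite P" and keys_subset_ground: "u \<in> P \<Longrightarrow> keys u \<subseteq> E"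
  using is_polymatroid unfolding discrete_polymatroid_def by auto

lemma augment: "u \<in> P \<Longrightarrow> v \<in> P \<Longrightarrow> vec_size u < vec_size v \<Longrightarrow> \<exists>i. lookup u i < lookup v i \<and> u + unit_vec i \<in> P"
  using is_polymatroid unfolding discrete_polymatroid_def by blast

lemma downward_closed:
  assumes u: "u \<in> P" and le: "\<And>i. lookup v i \<le> lookup u i"
  shows "v \<in> P"
proof -
  have "keys v \<subseteq> E" using keys_subset_ground[OF u] le by (metis in_keys_iff le_zero_eq subset_iff)
  then show ?thesis using is_polymatroid u le unfolding discrete_polymatroid_def by blast
qed

lemma restrict_vec_in_P: "x \<in> P \<Longrightarrow> restrict_vec A x \<in> P"
  by (rule downward_closed) (auto simp: lookup_restrict_vec)

definition rank :: "'i set \<Rightarrow> nat" where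
  "rank A = Max (vec_size_on A ` P)"

lemma vec_size_on_le_rank: "x \<in> P \<Longrightarrow> vec_size_on A x \<le> rank A"
  unfolding rank_def using finite_P by (intro Max_ge) auto

lemma rank_attained: "\<exists>z\<in>P. vec_size_on A z = rank A"
proof -
  have "rank A \<in> vec_size_on A ` P" unfolding rank_def using finite_P P_nonempty by (intro Max_in) auto
  then show ?thesis by auto
qed

lemma exists_augmentation_within:
  assumes x: "x \<in> P" and "keys x \<subseteq> A" "A \<subseteq> E" and less: "vec_size_on A x < rank A"
  shows "\<exists>k\<in>A. x + unit_vec k \<in> P"
proof -
  obtain z where z: "z \<in> P" "vec_size_on A z = rank A" using rank_attained by blast
  have fin: "finite A" using assms(3) finite_ground by (rule finite_subset)
  have "vec_size (restrict_vec A z) = rank A"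
    using keys_restrict_vec[of A z] fin z(2)
    by (simp add: vec_size_eq_vec_size_on vec_size_on_restrict_vec)
  moreover have "vec_size x = vec_size_on A x" using fin assms(2) by (rule vec_size_eq_vec_size_on)
  ultimately obtain k where "lookup x k < lookup (restrict_vec A z) k" "x + unit_vec k \<in> P"
    using augment[OF x restrict_vec_in_P[OF z(1), of A]] less by auto
  then show ?thesis by (auto simp: lookup_restrict_vec split: if_splits)
qed

lemma exists_extension_to_rank:
  assumes "x \<in> P" "keys x \<subseteq> A" "A \<subseteq> E"
  shows "\<exists>y\<in>P. keys y \<subseteq> A \<and> (\<forall>i. lookup x i \<le> lookup y i) \<and> vec_size_on A y = rank A"
  using assms
proof (induction "rank A - vec_size_on A x" arbitrary: x rule: less_induct)
  case less
  show ?case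
  proof (cases "vec_size_on A x < rank A")
    case False
    then show ?thesis using less.prems vec_size_on_le_rank[OF less.prems(1), of A] by force
  next
    case True
    obtain k where k: "k \<in> A" "x + unit_vec k \<in> P"
      using exists_augmentation_within[OF less.prems True] by blast
    have "vec_size_on A (x + unit_vec k) = vec_size_on A x + 1"
      using k(1) less.prems(3) finite_ground
      by (simp add: vec_size_on_add vec_size_on_unit_vec finite_subset)
    then have "rank A - vec_size_on A (x + unit_vec k) < rank A - vec_size_on A x"
      using True by simp
    moreover have "keys (x + unit_vec k) \<subseteq> A"
      using keys_add[of x "unit_vec k"] less.prems(2) k(1) by auto
    ultimately obtain y where "y \<in> P" "keys y \<subseteq> A" "\<forall>i. lookup (x + unit_vec k) i \<le> lookup y i"
        "vec_size_on A y = rank A"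
      using less.hyps k(2) less.prems(3) by blast
    then show ?thesis by (metis add_leD1 lookup_add)
  qed
qed

text \<open>Extend a maximiser for \<open>A \<inter> B\<close> first to a maximiser for \<open>A\<close>, then for \<open>A \<union> B\<close>;
  the resulting vector is optimal on \<open>A\<close>, \<open>A \<inter> B\<close> and \<open>A \<union> B\<close> simultaneously.\<close>

lemma rank_submodular:
  assumes "A \<subseteq> E" "B \<subseteq> E"
  shows "rank (A \<union> B) + rank (A \<inter> B) \<le> rank A + rank B"
proof -
  have fin: "finite A" "finite B" using assms finite_ground finite_subset by auto
  obtain y0 where y0: "y0 \<in> P" "vec_size_on (A \<inter> B) y0 = rank (A \<inter> B)" using rank_attained by blast
  define y where "y = restrict_vec (A \<inter> B) y0"
  have y: "y \<in> P" "keys y \<subseteq> A" "vec_size_on (A \<inter> B) y = rank (A \<inter> B)"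
    using restrict_vec_in_P[OF y0(1)] keys_restrict_vec[of "A \<inter> B" y0] y0(2) fin
    by (auto simp: y_def vec_size_on_restrict_vec)
  obtain z where z: "z \<in> P" "keys z \<subseteq> A" "\<forall>i. lookup y i \<le> lookup z i" "vec_size_on A z = rank A"
    using exists_extension_to_rank[OF y(1,2) assms(1)] by blast
  obtain w where w: "w \<in> P" "\<forall>i. lookup z i \<le> lookup w i" "vec_size_on (A \<union> B) w = rank (A \<union> B)"
    using exists_extension_to_rank[OF z(1), of "A \<union> B"] z(2) assms by auto
  have "rank A \<le> vec_size_on A w" using z(4) w(2) vec_size_on_mono by metis
  moreover have "rank (A \<inter> B) \<le> vec_size_on (A \<inter> B) w"
    using y(3) z(3) w(2) vec_size_on_mono le_trans by metis
  moreover have "vec_size_on (A \<union> B) w + vec_size_on (A \<inter> B) w = vec_size_on A w + vec_size_on B w"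
    unfolding vec_size_on_def using fin by (rule sum.union_inter)
  ultimately show ?thesis using w(3) vec_size_on_le_rank[OF w(1)] by (metis add_le_mono le_antisym)
qed

lemma bases_iff: "u \<in> bases P \<longleftrightarrow> u \<in> P \<and> vec_size u = rank E"
proof
  assume u: "u \<in> bases P"
  then have uP: "u \<in> P" by (simp add: bases_def)
  have size_u: "vec_size u = vec_size_on E u"
    using finite_ground keys_subset_ground[OF uP] by (rule vec_size_eq_vec_size_on)
  obtain z where z: "z \<in> P" "vec_size_on E z = rank E" using rank_attained by blast
  have "vec_size z = rank E"
    using finite_ground keys_subset_ground[OF z(1)] z(2) by (simp add: vec_size_eq_vec_size_on)
  moreover have "\<not> vec_size u < vec_size z"
  proof
    assume "vec_size u < vec_size z"
    then obtain i where "u + unit_vec i \<in> P" using augment[OF uP z(1)] by blast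
    then have "u + unit_vec i = u" using u unfolding bases_def by (auto simp: lookup_add)
    from arg_cong[OF this, of "\<lambda>v. lookup v i"] show False by (simp add: lookup_add lookup_unit_vec)
  qed
  ultimately show "u \<in> P \<and> vec_size u = rank E"
    using uP size_u vec_size_on_le_rank[OF uP, of E] by simp
next
  assume u: "u \<in> P \<and> vec_size u = rank E"
  show "u \<in> bases P" unfolding bases_def
  proof (intro CollectI conjI ballI allI impI)
    fix v assume v: "v \<in> P" and le: "\<forall>i. lookup u i \<le> lookup v i"
    have uv: "u + (v - u) = v" using le by (intro add_diff_cancel_pointwise_le) auto
    have "vec_size v \<le> rank E"
      using vec_size_on_le_rank[OF v] vec_size_eq_vec_size_on[OF finite_ground keys_subset_ground[OF v]]
      by simp
    then have "vec_size (v - u) = 0" using arg_cong[OF uv, of vec_size] u by (simp add: vec_size_add)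
    then show "v = u" using uv by (simp add: vec_size_eq_0_iff)
  qed (use u in simp)
qed

lemma exists_between:
  assumes s: "s \<in> P" and t: "t \<in> P" and "vec_size s \<le> k"
  shows "k \<le> vec_size t \<Longrightarrow>
    \<exists>z\<in>P. vec_size z = k \<and> (\<forall>i. lookup s i \<le> lookup z i \<and> lookup z i \<le> max (lookup s i) (lookup t i))"
  using assms(3)
proof (induction k rule: dec_induct)
  case base
  then show ?case using s by auto
next
  case (step k)
  then obtain z where z: "z \<in> P" "vec_size z = k"
    "\<forall>i. lookup s i \<le> lookup z i \<and> lookup z i \<le> max (lookup s i) (lookup t i)" by auto
  obtain j where "lookup z j < lookup t j" "z + unit_vec j \<in> P"
    using augment[OF z(1) t] z(2) step.prems by auto
  moreover have "lookup s i \<le> lookup (z + unit_vec j) i \<and>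
      lookup (z + unit_vec j) i \<le> max (lookup s i) (lookup t i)" for i
    using z(3)[rule_format, of i] \<open>lookup z j < lookup t j\<close> by (auto simp: lookup_add lookup_unit_vec)
  ultimately show ?case using z(2) by (intro bexI[of _ "z + unit_vec j"]) (auto simp: vec_size_add)
qed

text \<open>If some \<open>s \<in> P\<close> below \<open>x + e\<^sub>k\<close> exceeds \<open>x\<close> at \<open>k\<close>, and \<open>x\<close> can be raised at every
  coordinate where it exceeds \<open>s\<close>, then \<open>x + e\<^sub>k \<in> P\<close>: fill \<open>s\<close> up to a vector
  \<open>z = x + e\<^sub>k - e\<^sub>c\<close> and augment \<open>z\<close> from \<open>x + e\<^sub>c\<close>.\<close>

lemma add_unit_vec_in_P_by_exchange:
  assumes x: "x \<in> P" and s: "s \<in> P"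
    and below: "\<And>i. lookup s i \<le> lookup (x + unit_vec k) i" and at_k: "lookup x k < lookup s k"
    and raise: "\<And>c. lookup s c < lookup x c \<Longrightarrow> x + unit_vec c \<in> P"
  shows "x + unit_vec k \<in> P"
proof (cases "vec_size x < vec_size s")
  case True
  then obtain i where "lookup x i < lookup s i" "x + unit_vec i \<in> P" using augment[OF x s] by blast
  moreover have "i = k" using below[of i] \<open>lookup x i < lookup s i\<close>
    by (auto simp: lookup_add lookup_unit_vec split: if_splits)
  ultimately show ?thesis by simp
next
  case False
  then obtain z where z: "z \<in> P" "vec_size z = vec_size x"
    "\<forall>i. lookup s i \<le> lookup z i \<and> lookup z i \<le> max (lookup s i) (lookup x i)"
    using exists_between[OF s x, of "vec_size x"] by force
  have z_le: "lookup z i \<le> lookup (x + unit_vec k) i" for i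
    using z(3)[rule_format, of i] below[of i] by (auto simp: lookup_add)
  have "vec_size (x + unit_vec k - z) = 1"
    using arg_cong[OF add_diff_cancel_pointwise_le[OF z_le], of vec_size] z(2)
    by (simp add: vec_size_add)
  then obtain c where c: "x + unit_vec k - z = unit_vec c" using vec_size_eq_1_imp_unit_vec by blast
  have zc: "z + unit_vec c = x + unit_vec k"
    using add_diff_cancel_pointwise_le[OF z_le] c by simp
  have "c \<noteq> k" using arg_cong[OF zc, of "\<lambda>v. lookup v k"] z(3)[rule_format, of k] at_k
    by (auto simp: lookup_add lookup_unit_vec)
  then have "lookup z c < lookup x c"
    using arg_cong[OF zc, of "\<lambda>v. lookup v c"] by (simp add: lookup_add lookup_unit_vec)
  then have xc: "x + unit_vec c \<in> P" using z(3)[rule_format, of c] by (intro raise) simp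
  have "vec_size z < vec_size (x + unit_vec c)" using z(2) by (simp add: vec_size_add)
  then obtain i where "lookup z i < lookup (x + unit_vec c) i" "z + unit_vec i \<in> P"
    using augment[OF z(1) xc] by blast
  moreover have "i = c"
    using calculation(1) arg_cong[OF zc, of "\<lambda>v. lookup v i"] \<open>c \<noteq> k\<close>
    by (auto simp: lookup_add lookup_unit_vec split: if_splits)
  ultimately show ?thesis using zc by simp
qed

definition sat :: "('i \<Rightarrow>\<^sub>0 nat) \<Rightarrow> 'i set" where
  "sat x = {c\<in>E. x + unit_vec c \<notin> P}"

definition tight :: "('i \<Rightarrow>\<^sub>0 nat) \<Rightarrow> 'i set \<Rightarrow> bool" where
  "tight x A \<longleftrightarrow> A \<subseteq> E \<and> vec_size_on A x = rank A"

lemma tight_sat: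
  assumes x: "x \<in> P"
  shows "tight x (sat x)"
proof (rule ccontr)
  let ?D = "sat x"
  have D: "?D \<subseteq> E" "finite ?D" using finite_ground finite_subset unfolding sat_def by auto
  assume "\<not> tight x ?D"
  then have less: "vec_size_on ?D x < rank ?D"
    using D(1) vec_size_on_le_rank[OF x, of ?D] unfolding tight_def by simp
  define y where "y = restrict_vec ?D x"
  have y: "y \<in> P" "keys y \<subseteq> ?D" "vec_size_on ?D y = vec_size_on ?D x"
    using restrict_vec_in_P[OF x] keys_restrict_vec[of ?D x] D(2)
    by (auto simp: y_def vec_size_on_restrict_vec)
  obtain k where k: "k \<in> ?D" "y + unit_vec k \<in> P"
    using exists_augmentation_within[OF y(1,2) D(1)] less y(3) by auto
  have "x + unit_vec k \<in> P"
  proof (rule add_unit_vec_in_P_by_exchange[OF x k(2)])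
    show "lookup (y + unit_vec k) i \<le> lookup (x + unit_vec k) i" for i
      by (simp add: y_def lookup_add lookup_restrict_vec)
    show "lookup x k < lookup (y + unit_vec k) k"
      using k(1) by (simp add: y_def lookup_add lookup_restrict_vec lookup_unit_vec)
    fix c assume c: "lookup (y + unit_vec k) c < lookup x c"
    then have "c \<notin> ?D" by (auto simp: y_def lookup_add lookup_restrict_vec)
    moreover have "c \<in> E" using c keys_subset_ground[OF x] by (auto simp: in_keys_iff)
    ultimately show "x + unit_vec c \<in> P" unfolding sat_def by blast
  qed
  then show False using k(1) unfolding sat_def by simp
qed

lemma tight_inter:
  assumes x: "x \<in> P" and "tight x A" "tight x B"
  shows "tight x (A \<inter> B)"
proof -
  have A: "A \<subseteq> E" "vec_size_on A x = rank A" and B: "B \<subseteq> E" "vec_size_on B x = rank B"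
    using assms(2,3) unfolding tight_def by auto
  have fin: "finite A" "finite B" using A(1) B(1) finite_ground finite_subset by auto
  have "vec_size_on (A \<union> B) x + vec_size_on (A \<inter> B) x = vec_size_on A x + vec_size_on B x"
    unfolding vec_size_on_def using fin by (rule sum.union_inter)
  then show ?thesis
    using rank_submodular[OF A(1) B(1)] vec_size_on_le_rank[OF x, of "A \<union> B"]
      vec_size_on_le_rank[OF x, of "A \<inter> B"] A B
    unfolding tight_def by auto
qed

text \<open>Submodularity, applied to a tight set \<open>U \<ni> i\<close> of \<open>v\<close> and the saturation set of
  \<open>u - e\<^sub>i\<close>, forbids \<open>v \<le> u\<close> on \<open>U - sat (u - e\<^sub>i)\<close>.\<close>

lemma exists_exchange_index:
  assumes u: "u \<in> P" and v: "v \<in> P" and i: "lookup v i < lookup u i" and U: "tight v U" "i \<in> U"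
  shows "\<exists>j\<in>U - sat (u - unit_vec i). lookup u j < lookup v j"
proof (rule ccontr)
  define T where "T = sat (u - unit_vec i)"
  have xu: "u - unit_vec i + unit_vec i = u" using i by (intro diff_unit_vec_add) simp
  have "u - unit_vec i \<in> P" using u by (rule downward_closed) (simp add: lookup_minus)
  then have T: "T \<subseteq> E" "vec_size_on T (u - unit_vec i) = rank T"
    using tight_sat unfolding T_def tight_def by blast+
  have iT: "i \<notin> T" unfolding T_def sat_def using xu u by simp
  have UE: "U \<subseteq> E" and tU: "vec_size_on U v = rank U" using U(1) unfolding tight_def by auto
  have fin: "finite U" "finite T" using UE T(1) finite_ground finite_subset by auto
  have "vec_size_on T u = vec_size_on T (u - unit_vec i)"
    unfolding vec_size_on_def using iT by (intro sum.cong) (auto simp: lookup_minus lookup_unit_vec)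
  with T(2) have uT: "vec_size_on T u = rank T" by simp
  assume "\<not> (\<exists>j\<in>U - sat (u - unit_vec i). lookup u j < lookup v j)"
  then have le: "\<forall>j\<in>U - T. lookup v j \<le> lookup u j" unfolding T_def using not_less by blast
  have "vec_size_on (U - T) v < vec_size_on (U - T) u"
    unfolding vec_size_on_def using fin le U(2) iT i by (intro sum_strict_mono_ex1) auto
  moreover have "vec_size_on (U \<union> T) u = vec_size_on T u + vec_size_on (U - T) u"
    unfolding vec_size_on_def using fin sum.union_disjoint[of T "U - T" "lookup u"]
    by (simp add: Un_commute)
  moreover have "vec_size_on U v = vec_size_on (U \<inter> T) v + vec_size_on (U - T) v"
    unfolding vec_size_on_def using fin(1) by (rule sum.Int_Diff)
  ultimately show False
    using rank_submodular[OF UE T(1)] vec_size_on_le_rank[OF u, of "U \<union> T"]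
      vec_size_on_le_rank[OF v, of "U \<inter> T"] tU uT by linarith
qed

text \<open>If \<open>i\<close> were saturated in \<open>v - e\<^sub>j\<close>, then \<open>U \<inter> sat (v - e\<^sub>j)\<close> would be a smaller tight
  set of \<open>v\<close> containing \<open>i\<close>.\<close>

lemma move_unit_into_minimal_tight_set:
  assumes v: "v \<in> P" and U: "tight v U" "i \<in> U"
    and U_min: "\<And>A. tight v A \<Longrightarrow> i \<in> A \<Longrightarrow> card U \<le> card A"
    and j: "j \<in> U" "1 \<le> lookup v j"
  shows "move_unit v j i \<in> P"
proof -
  define z where "z = v - unit_vec j"
  have zP: "z \<in> P" unfolding z_def using v by (rule downward_closed) (simp add: lookup_minus)
  have jD: "j \<notin> sat z" using diff_unit_vec_add[OF j(2)] v unfolding z_def sat_def by simp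
  have "i \<notin> sat z"
  proof
    assume iD: "i \<in> sat z"
    have "vec_size_on (sat z) v = vec_size_on (sat z) z"
      unfolding vec_size_on_def using jD
      by (intro sum.cong) (auto simp: z_def lookup_minus lookup_unit_vec)
    then have "tight v (sat z)" using tight_sat[OF zP] unfolding tight_def by simp
    then have "tight v (U \<inter> sat z)" using tight_inter[OF v U(1)] by blast
    then have "card U \<le> card (U \<inter> sat z)" using U_min iD U(2) by blast
    moreover have "finite U" using U(1) finite_ground finite_subset unfolding tight_def by blast
    then have "card (U \<inter> sat z) < card U" using j(1) jD by (intro psubset_card_mono) auto
    ultimately show False by simp
  qed
  moreover have "i \<in> E" using U unfolding tight_def by auto
  ultimately show ?thesis unfolding move_unit_def z_def sat_def by simp
qed

lemma bases_symmetric_exchange: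
  assumes u: "u \<in> bases P" and v: "v \<in> bases P" and i: "lookup v i < lookup u i"
  shows "\<exists>j. lookup u j < lookup v j \<and> move_unit u i j \<in> bases P \<and> move_unit v j i \<in> bases P"
proof -
  have uP: "u \<in> P" "vec_size u = rank E" and vP: "v \<in> P" "vec_size v = rank E"
    using u v bases_iff by auto
  have "i \<in> E" using keys_subset_ground[OF uP(1)] i by (auto simp: in_keys_iff)
  moreover have "tight v E"
    using vP finite_ground keys_subset_ground[OF vP(1)] by (simp add: tight_def vec_size_eq_vec_size_on)
  ultimately obtain U where U: "tight v U" "i \<in> U"
    and U_min: "\<And>A. tight v A \<Longrightarrow> i \<in> A \<Longrightarrow> card U \<le> card A"
    using ex_has_least_nat[of "\<lambda>A. tight v A \<and> i \<in> A" E card] by blast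
  obtain j where j: "j \<in> U" "j \<notin> sat (u - unit_vec i)" "lookup u j < lookup v j"
    using exists_exchange_index[OF uP(1) vP(1) i U] by blast
  have "j \<in> E" using j(1) U(1) unfolding tight_def by auto
  then have "move_unit u i j \<in> P" using j(2) unfolding sat_def move_unit_def by simp
  moreover have "move_unit v j i \<in> P"
    using move_unit_into_minimal_tight_set[OF vP(1) U U_min j(1)] j(3) by simp
  ultimately show ?thesis
    using j(3) i uP(2) vP(2) by (auto simp: bases_iff vec_size_move_unit)
qed

end

section \<open>Lifting along \<open>\<alpha>\<close>\<close>

lemma sum_mset_eq_imp_exists_greater:
  fixes f g :: "'a \<Rightarrow> nat"
  assumes sums: "sum_mset (image_mset f M) = sum_mset (image_mset g M)" and x: "x \<in># M" "f x < g x"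
  shows "\<exists>y\<in>#M. g y < f y"
proof (rule ccontr)
  assume "\<not> ?thesis"
  then have le: "\<forall>y\<in>#M. f y \<le> g y" by (auto simp: not_less)
  obtain M' where M: "M = add_mset x M'" using multi_member_split[OF x(1)] by blast
  have "sum_mset (image_mset f M') \<le> sum_mset (image_mset g M')"
    using le M by (intro sum_mset_mono) auto
  then show False using sums x(2) M by simp
qed

lemma sum_eq_imp_exists_greater:
  fixes f g :: "'a \<Rightarrow> nat"
  assumes "finite A" "sum f A = sum g A" "x \<in> A" "f x < g x"
  shows "\<exists>y\<in>A. g y < f y"
  using sum_mset_eq_imp_exists_greater[of f "mset_set A" g x] assms by (simp add: sum_unfold_sum_mset)

lemma image_mset_eq_imp_pairing:
  assumes "image_mset f W = image_mset f W'"
  shows "\<exists>Z. image_mset fst Z = W \<and> image_mset snd Z = W' \<and> (\<forall>z\<in>#Z. f (fst z) = f (snd z))"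
  using assms
proof (induction W arbitrary: W')
  case empty
  then show ?case by (intro exI[of _ "{#}"]) simp
next
  case (add x W)
  then obtain W0 y where W': "W' = add_mset y W0" "f y = f x" "image_mset f W0 = image_mset f W"
    using msed_map_invR[of f W' "f x" "image_mset f W"] by auto
  then obtain Z where "image_mset fst Z = W" "image_mset snd Z = W0" "\<forall>z\<in>#Z. f (fst z) = f (snd z)"
    using add.IH by metis
  with W' show ?case by (intro exI[of _ "add_mset (x, y) Z"]) auto
qed

lemma image_mset_eq_add_two:
  assumes "image_mset f W = T + {#u1, u2#}"
  shows "\<exists>x1 x2 W0. W = W0 + {#x1, x2#} \<and> f x1 = u1 \<and> f x2 = u2 \<and> image_mset f W0 = T"
proof -
  obtain W1 x1 where 1: "W = add_mset x1 W1" "f x1 = u1" "image_mset f W1 = add_mset u2 T"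
    using msed_map_invR[of f W u1 "add_mset u2 T"] assms by auto
  obtain W0 x2 where 2: "W1 = add_mset x2 W0" "f x2 = u2" "image_mset f W0 = T"
    using msed_map_invR[OF 1(3)] by blast
  show ?thesis using 1 2 by (intro exI[of _ x1] exI[of _ x2] exI[of _ W0]) simp
qed

lemma double_swap_move_unit:
  assumes "{x1, x2, move_unit x1 p c, move_unit x2 c p} \<subseteq> B"
    and "lookup x2 p < lookup x1 p" "lookup x1 c < lookup x2 c"
  shows "double_swap B x1 x2 (move_unit x1 p c) (move_unit x2 c p)"
  using assms move_unit_add_unit_vec[of x1 p c] move_unit_add_unit_vec[of x2 c p]
  unfolding double_swap_def by auto

lemma vec_size_diff_move_unit:
  assumes "lookup y p < lookup x p" "lookup x q < lookup y q"
  shows "vec_size (move_unit x p q - y) + 1 = vec_size (x - y)"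
proof -
  have "x - y = (move_unit x p q - y) + unit_vec p"
    using assms by (intro poly_mapping_eqI)
      (auto simp: lookup_move_unit lookup_add lookup_minus lookup_unit_vec)
  then show ?thesis by (simp add: vec_size_add)
qed

lemma vec_size_diff_move_unit_le:
  assumes "lookup y q < lookup x q"
  shows "vec_size (move_unit x q p - y) \<le> vec_size (x - y)"
proof -
  have "lookup (move_unit x q p - y + unit_vec q) i \<le> lookup (x - y + unit_vec p) i" for i
    using assms by (auto simp: lookup_move_unit lookup_add lookup_minus lookup_unit_vec)
  then have "vec_size (move_unit x q p - y + unit_vec q) \<le> vec_size (x - y + unit_vec p)"
    by (rule vec_size_mono)
  then show ?thesis by (simp add: vec_size_add)
qed

lemma lookup_sum_mset: "lookup (sum_mset W) q = sum_mset (image_mset (\<lambda>v. lookup v q) W)"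
  by (induction W) (simp_all add: lookup_add)

lemma exists_opposite_pair:
  fixes Z :: "(('i \<Rightarrow>\<^sub>0 nat) \<times> ('i \<Rightarrow>\<^sub>0 nat)) multiset"
  assumes sums: "sum_mset (image_mset fst Z) = sum_mset (image_mset snd Z)"
    and xy: "(x, y) \<in># Z" "lookup x q < lookup y q"
  shows "\<exists>x' y' R. Z = add_mset (x, y) (add_mset (x', y') R) \<and> lookup y' q < lookup x' q"
proof -
  have "sum_mset (image_mset (\<lambda>z. lookup (fst z) q) Z) =
      sum_mset (image_mset (\<lambda>z. lookup (snd z) q) Z)"
    using arg_cong[OF sums, of "\<lambda>v. lookup v q"]
    by (simp add: lookup_sum_mset image_mset.compositionality comp_def)
  then have "\<exists>z\<in>#Z. lookup (snd z) q < lookup (fst z) q"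
    using xy by (intro sum_mset_eq_imp_exists_greater[where x = "(x, y)"]) auto
  then obtain x' y' where z': "(x', y') \<in># Z" "lookup y' q < lookup x' q" by auto
  obtain Z0 where Z0: "Z = add_mset (x, y) Z0" using multi_member_split[OF xy(1)] by blast
  have "(x', y') \<noteq> (x, y)" using z'(2) xy(2) by auto
  then have "(x', y') \<in># Z0" using z'(1) Z0 by auto
  then obtain R where "Z0 = add_mset (x', y') R" using multi_member_split[of "(x', y')" Z0] by blast
  then show ?thesis using Z0 z'(2) by blast
qed

definition pair_distance :: "(('i \<Rightarrow>\<^sub>0 nat) \<times> ('i \<Rightarrow>\<^sub>0 nat)) multiset \<Rightarrow> nat" where
  "pair_distance Z = sum_mset (image_mset (\<lambda>z. vec_size (fst z - snd z)) Z)"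

definition block_proj :: "(nat \<Rightarrow> nat) \<Rightarrow> (nat \<times> nat \<Rightarrow>\<^sub>0 nat) \<Rightarrow> (nat \<Rightarrow>\<^sub>0 nat)" where
  "block_proj \<alpha> w = Abs_poly_mapping (\<lambda>i. \<Sum>a\<in>{1..\<alpha> i}. lookup w (i, a))"

lemma lookup_block_proj: "lookup (block_proj \<alpha> w) i = (\<Sum>a\<in>{1..\<alpha> i}. lookup w (i, a))"
proof -
  have "{i. (\<Sum>a\<in>{1..\<alpha> i}. lookup w (i, a)) \<noteq> 0} \<subseteq> fst ` keys w"
  proof
    fix i assume i: "i \<in> {i. (\<Sum>a\<in>{1..\<alpha> i}. lookup w (i, a)) \<noteq> 0}"
    have "\<exists>a. lookup w (i, a) \<noteq> 0"
    proof (rule ccontr)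
      assume "\<nexists>a. lookup w (i, a) \<noteq> 0"
      then show False using i by simp
    qed
    then obtain a where "lookup w (i, a) \<noteq> 0" ..
    then have "(i, a) \<in> keys w" by (simp add: in_keys_iff)
    then show "i \<in> fst ` keys w" by (metis fst_conv image_eqI)
  qed
  then have "finite {i. (\<Sum>a\<in>{1..\<alpha> i}. lookup w (i, a)) \<noteq> 0}"
    by (rule finite_subset) simp
  then show ?thesis unfolding block_proj_def by simp
qed

lemma block_proj_add: "block_proj \<alpha> (v + w) = block_proj \<alpha> v + block_proj \<alpha> w"
  by (rule poly_mapping_eqI) (simp add: lookup_block_proj lookup_add sum.distrib)

lemma block_proj_sum_mset: "block_proj \<alpha> (sum_mset W) = sum_mset (image_mset (block_proj \<alpha>) W)"
proof (induction W)
  case empty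
  then show ?case by (intro poly_mapping_eqI) (simp add: lookup_block_proj)
qed (simp add: block_proj_add)

lemma block_proj_unit_vec: "a \<in> {1..\<alpha> i} \<Longrightarrow> block_proj \<alpha> (unit_vec (i, a)) = unit_vec i"
  by (rule poly_mapping_eqI) (auto simp: lookup_block_proj lookup_unit_vec)

locale polymatroid_lifting = polymatroid "{1..n}" P
  for n :: nat and P :: "(nat \<Rightarrow>\<^sub>0 nat) set" +
  fixes \<alpha> :: "nat \<Rightarrow> nat"
begin

abbreviation "G \<equiv> lift_ground n \<alpha>"
abbreviation "BL \<equiv> lift_bases n \<alpha> P"
abbreviation "proj \<equiv> block_proj \<alpha>"

lemma mem_lift_ground: "(i, a) \<in> G \<longleftrightarrow> i \<in> {1..n} \<and> a \<in> {1..\<alpha> i}"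
  unfolding lift_ground_def by auto

lemma lookup_block_proj_outside:
  assumes "keys w \<subseteq> G" "i \<notin> {1..n}"
  shows "lookup (proj w) i = 0"
  unfolding lookup_block_proj
proof (rule sum.neutral, rule ballI)
  fix a assume "a \<in> {1..\<alpha> i}"
  then have "(i, a) \<notin> keys w" using assms by (auto simp: mem_lift_ground)
  then show "lookup w (i, a) = 0" by (simp add: in_keys_iff)
qed

lemma lift_vec_iff:
  assumes u: "keys u \<subseteq> {1..n}"
  shows "w \<in> lift_vec n \<alpha> u \<longleftrightarrow> keys w \<subseteq> G \<and> proj w = u"
proof
  assume w: "w \<in> lift_vec n \<alpha> u"
  have "lookup (proj w) i = lookup u i" for i
  proof (cases "i \<in> {1..n}")
    case True
    then show ?thesis using w by (simp add: lift_vec_def lookup_block_proj)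
  next
    case False
    then have "lookup u i = 0" using u by (auto simp: in_keys_iff)
    then show ?thesis using False w lookup_block_proj_outside unfolding lift_vec_def by simp
  qed
  then show "keys w \<subseteq> G \<and> proj w = u" using w unfolding lift_vec_def by (auto intro: poly_mapping_eqI)
next
  assume "keys w \<subseteq> G \<and> proj w = u"
  then show "w \<in> lift_vec n \<alpha> u" unfolding lift_vec_def by (auto simp: lookup_block_proj)
qed

lemma lift_bases_iff: "w \<in> BL \<longleftrightarrow> keys w \<subseteq> G \<and> proj w \<in> bases P"
proof -
  have "w \<in> lift_vec n \<alpha> u \<longleftrightarrow> keys w \<subseteq> G \<and> proj w = u" if "u \<in> bases P" for u
    using that keys_subset_ground unfolding bases_def by (intro lift_vec_iff) blast
  then show ?thesis unfolding lift_bases_def by blast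
qed

lemma proj_unit_vec: "p \<in> G \<Longrightarrow> proj (unit_vec p) = unit_vec (fst p)"
  by (cases p) (simp add: mem_lift_ground block_proj_unit_vec)

lemma move_unit_in_lift_bases:
  assumes x: "x \<in> BL" and "p \<in> G" "c \<in> G" "1 \<le> lookup x p"
    and w: "w \<in> bases P" "w + unit_vec (fst p) = proj x + unit_vec (fst c)"
  shows "move_unit x p c \<in> BL" "proj (move_unit x p c) = w"
proof -
  have "proj (move_unit x p c) + unit_vec (fst p) = proj x + unit_vec (fst c)"
    using arg_cong[OF move_unit_add_unit_vec[OF assms(4), of c], of proj] assms(2,3)
    by (simp add: block_proj_add proj_unit_vec)
  then show "proj (move_unit x p c) = w" using w(2) by (metis add_right_imp_eq)
  moreover have "keys (move_unit x p c) \<subseteq> G"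
    using x assms(3) keys_move_unit[of x p c] lift_bases_iff by blast
  ultimately show "move_unit x p c \<in> BL" using w(1) lift_bases_iff by blast
qed

lemma move_unit_within_block:
  assumes "x \<in> BL" "p \<in> G" "c \<in> G" "1 \<le> lookup x p" "fst p = fst c"
  shows "move_unit x p c \<in> BL" "proj (move_unit x p c) = proj x"
  using move_unit_in_lift_bases[OF assms(1-4), of "proj x"] assms(1,5) lift_bases_iff by auto

lemma exists_less_in_block:
  assumes "keys x \<subseteq> G" "lookup (proj y) i < lookup (proj x) i"
  shows "\<exists>a. (i, a) \<in> G \<and> lookup y (i, a) < lookup x (i, a)"
proof -
  obtain a where "lookup y (i, a) < lookup x (i, a)"
    using assms(2) unfolding lookup_block_proj by (meson not_less sum_mono)
  moreover then have "(i, a) \<in> keys x" by (simp add: in_keys_iff)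
  ultimately show ?thesis using assms(1) by blast
qed

lemma exists_greater_in_block:
  assumes "proj x = proj y" "(i, a) \<in> G" "lookup x (i, a) < lookup y (i, a)"
  shows "\<exists>b. (i, b) \<in> G \<and> lookup y (i, b) < lookup x (i, b)"
proof -
  have "(\<Sum>b\<in>{1..\<alpha> i}. lookup x (i, b)) = (\<Sum>b\<in>{1..\<alpha> i}. lookup y (i, b))"
    using arg_cong[OF assms(1), of "\<lambda>v. lookup v i"] by (simp add: lookup_block_proj)
  then obtain b where "b \<in> {1..\<alpha> i}" "lookup y (i, b) < lookup x (i, b)"
    using sum_eq_imp_exists_greater[of "{1..\<alpha> i}" "\<lambda>b. lookup x (i, b)" "\<lambda>b. lookup y (i, b)" a]
      assms(2,3) by (auto simp: mem_lift_ground)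
  then show ?thesis using assms(2) by (auto simp: mem_lift_ground)
qed

text \<open>If no coordinate in the block of \<open>p\<close> will do, the block sum of \<open>x\<close> exceeds that of \<open>y\<close>,
  and the symmetric exchange of the projections provides a partner in another block.\<close>

lemma exists_exchange_partner:
  assumes x: "x \<in> BL" and y: "y \<in> BL" and p: "p \<in> G" and less: "lookup y p < lookup x p"
  shows "\<exists>c\<in>G. lookup x c < lookup y c \<and> move_unit x p c \<in> BL \<and> move_unit y c p \<in> BL"
proof (cases "\<exists>c\<in>G. fst c = fst p \<and> lookup x c < lookup y c")
  case True
  then obtain c where c: "c \<in> G" "fst c = fst p" "lookup x c < lookup y c" by blast
  then show ?thesis
    using move_unit_within_block[OF x p c(1)] move_unit_within_block[OF y c(1) p] less by auto
next
  case False
  obtain i a where p_eq: "p = (i, a)" by force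
  have "lookup (proj y) i < lookup (proj x) i"
    unfolding lookup_block_proj
    using False p p_eq less by (intro sum_strict_mono_ex1) (auto simp: mem_lift_ground not_less)
  moreover have "proj x \<in> bases P" "proj y \<in> bases P" using x y lift_bases_iff by auto
  ultimately obtain j where j: "lookup (proj x) j < lookup (proj y) j"
    "move_unit (proj x) i j \<in> bases P" "move_unit (proj y) j i \<in> bases P"
    using bases_symmetric_exchange by blast
  obtain b where b: "(j, b) \<in> G" "lookup x (j, b) < lookup y (j, b)"
    using exists_less_in_block[OF _ j(1)] y lift_bases_iff by blast
  have "move_unit x p (j, b) \<in> BL"
    using move_unit_in_lift_bases(1)[OF x p b(1) _ j(2)] less p_eq
      move_unit_add_unit_vec[of "proj x" i j] \<open>lookup (proj y) i < lookup (proj x) i\<close> by simp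
  moreover have "move_unit y (j, b) p \<in> BL"
    using move_unit_in_lift_bases(1)[OF y b(1) p _ j(3)] b(2) p_eq
      move_unit_add_unit_vec[of "proj y" j i] j(1) by simp
  ultimately show ?thesis using b by blast
qed

text \<open>Both pairs are one double swap away from \<open>(x - e\<^sub>p + e\<^sub>c, y - e\<^sub>c + e\<^sub>p)\<close>, where \<open>c\<close> is
  an exchange partner of \<open>p\<close>.\<close>

lemma swap_equiv_move_within_block_excess:
  assumes x: "x \<in> BL" and y: "y \<in> BL" and pq: "p \<in> G" "q \<in> G" "fst p = fst q" "p \<noteq> q"
    and excess: "lookup y p + 2 \<le> lookup x p" "lookup y q \<le> lookup x q" and yq: "1 \<le> lookup y q"
  shows "equivclp (swap_move BL) {#x, y#} {#move_unit x p q, move_unit y q p#}"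
proof -
  obtain c where c: "c \<in> G" "lookup x c < lookup y c" "move_unit x p c \<in> BL" "move_unit y c p \<in> BL"
    using exists_exchange_partner[OF x y pq(1)] excess(1) by auto
  have cpq: "c \<noteq> p" "c \<noteq> q" using c(2) excess by auto
  have xp: "1 \<le> lookup x p" using excess(1) by simp
  define x' y' where "x' = move_unit x p q" and "y' = move_unit y q p"
  have x'y': "x' \<in> BL" "y' \<in> BL"
    unfolding x'_def y'_def using move_unit_within_block pq xp yq x y by auto
  have "move_unit x' q c = move_unit x p c"
    unfolding x'_def using xp pq(4) by (rule move_unit_move_unit)
  moreover have "move_unit y' c q = move_unit y c p"
    unfolding y'_def by (rule poly_mapping_eqI) (use yq c(2) cpq pq(4) in \<open>auto simp: lookup_move_unit\<close>)
  ultimately have "double_swap BL x' y' (move_unit x p c) (move_unit y c p)"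
    using double_swap_move_unit[of x' y' q c BL] x'y' c(3,4) xp yq excess c(2) cpq pq(4)
    by (simp add: x'_def y'_def lookup_move_unit)
  moreover have "double_swap BL x y (move_unit x p c) (move_unit y c p)"
    using double_swap_move_unit[of x y p c BL] x y c excess by simp
  ultimately show ?thesis unfolding x'_def y'_def
    by (meson equivclp_sym equivclp_trans r_into_equivclp swap_move_double_swap)
qed

text \<open>Unless one of the two pairs has a surplus of at least two at \<open>p\<close> or at \<open>q\<close>, the move
  itself or its reverse is a double swap.\<close>

lemma swap_equiv_move_within_block:
  assumes x: "x \<in> BL" and y: "y \<in> BL" and pq: "p \<in> G" "q \<in> G" "fst p = fst q" "p \<noteq> q"
    and xp: "1 \<le> lookup x p" and yq: "1 \<le> lookup y q"
  shows "equivclp (swap_move BL) {#x, y#} {#move_unit x p q, move_unit y q p#}"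
proof -
  have x'y': "move_unit x p q \<in> BL" "move_unit y q p \<in> BL"
    using move_unit_within_block pq xp yq x y by auto
  consider (direct) "lookup y p < lookup x p" "lookup x q < lookup y q"
    | (reverse) "lookup y q < lookup x q + 2" "lookup x p < lookup y p + 2"
    | (excess_x) "lookup y p + 2 \<le> lookup x p" "lookup y q \<le> lookup x q"
    | (excess_y) "lookup x p \<le> lookup y p" "lookup x q + 2 \<le> lookup y q"
    by linarith
  then show ?thesis
  proof cases
    case direct
    then show ?thesis
      by (intro r_into_equivclp swap_move_double_swap double_swap_move_unit) (use x y x'y' in auto)
  next
    case reverse
    have moved_back: "move_unit (move_unit x p q) q p = x" "move_unit (move_unit y q p) p q = y"
      using xp yq pq(4) by (simp_all add: move_unit_move_unit move_unit_self)
    have "double_swap BL (move_unit x p q) (move_unit y q p)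
        (move_unit (move_unit x p q) q p) (move_unit (move_unit y q p) p q)"
      using reverse xp yq pq(4) x'y' x y moved_back
      by (intro double_swap_move_unit) (auto simp: lookup_move_unit)
    then have "swap_move BL {#move_unit x p q, move_unit y q p#} {#x, y#}"
      using swap_move_double_swap unfolding moved_back by blast
    then show ?thesis by (rule equivclp_sym[OF r_into_equivclp])
  next
    case excess_x
    then show ?thesis using swap_equiv_move_within_block_excess[OF x y pq] yq by simp
  next
    case excess_y
    then show ?thesis
      using swap_equiv_move_within_block_excess[OF y x pq(2,1) pq(3)[symmetric] pq(4)[symmetric]] xp
      by (simp add: add_mset_commute)
  qed
qed

lemma exists_block_discrepancy:
  assumes x: "x \<in> BL" and y: "y \<in> BL" and "proj x = proj y" "x \<noteq> y"
  shows "\<exists>p q. p \<in> G \<and> q \<in> G \<and> fst p = fst q \<and> lookup y p < lookup x p \<and> lookup x q < lookup y q"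
proof -
  obtain i a where c: "lookup x (i, a) \<noteq> lookup y (i, a)"
    using assms(4) poly_mapping_eqI by (metis surj_pair)
  then have "(i, a) \<in> keys x \<union> keys y" by (auto simp: in_keys_iff)
  then have G: "(i, a) \<in> G" using x y unfolding lift_bases_iff by blast
  show ?thesis
  proof (cases "lookup y (i, a) < lookup x (i, a)")
    case True
    then obtain b where "(i, b) \<in> G" "lookup x (i, b) < lookup y (i, b)"
      using exists_greater_in_block[of y x i a] assms(3) G by auto
    then show ?thesis using True G by (intro exI[of _ "(i, a)"] exI[of _ "(i, b)"]) simp
  next
    case False
    then obtain b where "(i, b) \<in> G" "lookup y (i, b) < lookup x (i, b)"
      using exists_greater_in_block[of x y i a] assms(3) G c by auto
    then show ?thesis using False c G by (intro exI[of _ "(i, b)"] exI[of _ "(i, a)"]) simp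
  qed
qed

definition proj_matching :: "((nat \<times> nat \<Rightarrow>\<^sub>0 nat) \<times> (nat \<times> nat \<Rightarrow>\<^sub>0 nat)) multiset \<Rightarrow> bool" where
  "proj_matching Z \<longleftrightarrow> (\<forall>z\<in>#Z. fst z \<in> BL \<and> snd z \<in> BL \<and> proj (fst z) = proj (snd z))"

text \<open>Moving a unit of \<open>x\<close> from \<open>p\<close> to \<open>q\<close> brings \<open>x\<close> closer to its partner \<open>y\<close>; the
  compensating move in a pair that has a surplus at \<open>q\<close> does not increase the distance.\<close>

lemma proj_matching_step:
  assumes Z: "proj_matching Z" and sums: "sum_mset (image_mset fst Z) = sum_mset (image_mset snd Z)"
    and xy: "(x, y) \<in># Z" "x \<noteq> y"
  shows "\<exists>Z'. proj_matching Z' \<and> image_mset snd Z' = image_mset snd Z \<and>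
    sum_mset (image_mset fst Z') = sum_mset (image_mset fst Z) \<and>
    equivclp (swap_move BL) (image_mset fst Z) (image_mset fst Z') \<and> pair_distance Z' < pair_distance Z"
proof -
  have x: "x \<in> BL" "y \<in> BL" "proj x = proj y" using Z xy(1) unfolding proj_matching_def by auto
  obtain p q where pq: "p \<in> G" "q \<in> G" "fst p = fst q"
    "lookup y p < lookup x p" "lookup x q < lookup y q"
    using exists_block_discrepancy[OF x xy(2)] by blast
  obtain x' y' R where Z_eq: "Z = add_mset (x, y) (add_mset (x', y') R)"
    and q: "lookup y' q < lookup x' q"
    using exists_opposite_pair[OF sums xy(1) pq(5)] by blast
  have x': "x' \<in> BL" "y' \<in> BL" "proj x' = proj y'" using Z unfolding Z_eq proj_matching_def by auto
  have "p \<noteq> q" using pq(4,5) by auto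
  define x1 x2 where "x1 = move_unit x p q" and "x2 = move_unit x' q p"
  have x1: "x1 \<in> BL" "proj x1 = proj y"
    unfolding x1_def using move_unit_within_block[OF x(1) pq(1,2)] pq(3,4) x(3) by auto
  have x2: "x2 \<in> BL" "proj x2 = proj y'"
    unfolding x2_def using move_unit_within_block[OF x'(1) pq(2,1)] pq(3) q x'(3) by auto
  define Z' where "Z' = add_mset (x1, y) (add_mset (x2, y') R)"
  have "equivclp (swap_move BL) {#x, x'#} {#x1, x2#}"
    unfolding x1_def x2_def using pq(4) q
    by (intro swap_equiv_move_within_block[OF x(1) x'(1) pq(1-3) \<open>p \<noteq> q\<close>]) simp_all
  then have conn:
    "equivclp (swap_move BL) (image_mset fst R + {#x, x'#}) (image_mset fst R + {#x1, x2#})"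
    by (rule equivclp_swap_move_add)
  have sum: "x1 + x2 = x + x'"
    unfolding x1_def x2_def using pq(4) q by (intro move_unit_add_move_unit) simp_all
  have "vec_size (x1 - y) + 1 = vec_size (x - y)"
    unfolding x1_def using pq(4,5) by (rule vec_size_diff_move_unit)
  moreover have "vec_size (x2 - y') \<le> vec_size (x' - y')"
    unfolding x2_def using q by (rule vec_size_diff_move_unit_le)
  ultimately have "pair_distance Z' < pair_distance Z"
    unfolding Z_eq Z'_def pair_distance_def by simp
  moreover have "proj_matching Z'"
    using Z x1 x2 unfolding Z_eq Z'_def proj_matching_def by auto
  moreover have "sum_mset (image_mset fst Z') = sum_mset (image_mset fst Z)"
    using sum unfolding Z_eq Z'_def by (simp flip: add.assoc)
  ultimately show ?thesis
    using conn unfolding Z_eq by (intro exI[of _ Z']) (simp add: Z'_def add_mset_commute)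
qed

lemma proj_matching_swap_equiv:
  assumes "proj_matching Z" "sum_mset (image_mset fst Z) = sum_mset (image_mset snd Z)"
  shows "equivclp (swap_move BL) (image_mset fst Z) (image_mset snd Z)"
  using assms
proof (induction "pair_distance Z" arbitrary: Z rule: less_induct)
  case less
  show ?case
  proof (cases "\<forall>z\<in>#Z. fst z = snd z")
    case True
    then have "image_mset fst Z = image_mset snd Z" by (intro image_mset_cong) blast
    then show ?thesis by simp
  next
    case False
    then obtain x y where "(x, y) \<in># Z" "x \<noteq> y" by auto
    then obtain Z' where Z': "proj_matching Z'" "image_mset snd Z' = image_mset snd Z"
      "sum_mset (image_mset fst Z') = sum_mset (image_mset fst Z)"
      "equivclp (swap_move BL) (image_mset fst Z) (image_mset fst Z')"
      "pair_distance Z' < pair_distance Z"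
      using proj_matching_step[OF less.prems] by blast
    have "sum_mset (image_mset fst Z') = sum_mset (image_mset snd Z')"
      using Z'(2,3) less.prems(2) by metis
    then have "equivclp (swap_move BL) (image_mset fst Z') (image_mset snd Z)"
      using less.hyps[OF Z'(5) Z'(1)] unfolding Z'(2) by blast
    with Z'(4) show ?thesis by (rule equivclp_trans)
  qed
qed

lemma fibre_swap_equiv:
  assumes "set_mset W \<subseteq> BL" "set_mset W' \<subseteq> BL"
    and "image_mset proj W = image_mset proj W'" "sum_mset W = sum_mset W'"
  shows "equivclp (swap_move BL) W W'"
proof -
  obtain Z where Z: "image_mset fst Z = W" "image_mset snd Z = W'" "\<forall>z\<in>#Z. proj (fst z) = proj (snd z)"
    using image_mset_eq_imp_pairing[OF assms(3)] by blast
  have "proj_matching Z" unfolding proj_matching_def using Z assms(1,2) by fastforce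
  then show ?thesis using proj_matching_swap_equiv Z assms(4) by metis
qed

lemma lift_double_swap:
  assumes x1: "x1 \<in> BL" and x2: "x2 \<in> BL" and ds: "double_swap (bases P) (proj x1) (proj x2) v1 v2"
  shows "\<exists>y1 y2. double_swap BL x1 x2 y1 y2 \<and> proj y1 = v1 \<and> proj y2 = v2"
proof -
  obtain i j where ij:
    "lookup (proj x2) i < lookup (proj x1) i" "lookup (proj x1) j < lookup (proj x2) j"
    "v1 + unit_vec i = proj x1 + unit_vec j" "v2 + unit_vec j = proj x2 + unit_vec i"
    and v: "v1 \<in> bases P" "v2 \<in> bases P"
    using ds unfolding double_swap_def by blast
  obtain a where a: "(i, a) \<in> G" "lookup x2 (i, a) < lookup x1 (i, a)"
    using exists_less_in_block[OF _ ij(1)] x1 lift_bases_iff by blast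
  obtain b where b: "(j, b) \<in> G" "lookup x1 (j, b) < lookup x2 (j, b)"
    using exists_less_in_block[OF _ ij(2)] x2 lift_bases_iff by blast
  have y1: "move_unit x1 (i, a) (j, b) \<in> BL" "proj (move_unit x1 (i, a) (j, b)) = v1"
    using move_unit_in_lift_bases[OF x1 a(1) b(1) _ v(1)] a(2) ij(3) by auto
  have y2: "move_unit x2 (j, b) (i, a) \<in> BL" "proj (move_unit x2 (j, b) (i, a)) = v2"
    using move_unit_in_lift_bases[OF x2 b(1) a(1) _ v(2)] b(2) ij(4) by auto
  have "double_swap BL x1 x2 (move_unit x1 (i, a) (j, b)) (move_unit x2 (j, b) (i, a))"
    using x1 x2 y1(1) y2(1) a(2) b(2) by (intro double_swap_move_unit) auto
  then show ?thesis using y1(2) y2(2) by blast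
qed

lemma lift_swap_move:
  assumes "swap_move (bases P) N N'" "set_mset W \<subseteq> BL" "image_mset proj W = N"
  shows "\<exists>W'. set_mset W' \<subseteq> BL \<and> image_mset proj W' = N' \<and> swap_move BL W W'"
proof -
  obtain T u1 u2 v1 v2 where ds: "double_swap (bases P) u1 u2 v1 v2"
    and N: "N = T + {#u1, u2#}" and N': "N' = T + {#v1, v2#}"
    using assms(1) unfolding swap_move_def by blast
  obtain x1 x2 W0 where W: "W = W0 + {#x1, x2#}" "proj x1 = u1" "proj x2 = u2" "image_mset proj W0 = T"
    using image_mset_eq_add_two[of proj W T u1 u2] assms(3) N by blast
  have x: "x1 \<in> BL" "x2 \<in> BL" "set_mset W0 \<subseteq> BL" using assms(2) W(1) by auto
  obtain y1 y2 where y: "double_swap BL x1 x2 y1 y2" "proj y1 = v1" "proj y2 = v2"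
    using lift_double_swap[OF x(1,2)] ds W(2,3) by blast
  have "y1 \<in> BL" "y2 \<in> BL" using y(1) unfolding double_swap_def by auto
  moreover have "swap_move BL W (W0 + {#y1, y2#})"
    unfolding W(1) using y(1) by (intro swap_move_add swap_move_double_swap)
  ultimately show ?thesis using x(3) y(2,3) W(4) N' by (intro exI[of _ "W0 + {#y1, y2#}"]) auto
qed

text \<open>A double swap can in general not be lifted backwards, but its source can be lifted
  with the same coordinate sum: move one unit in each of the two lifted bases.\<close>

lemma lift_reverse_swap_move:
  assumes "swap_move (bases P) N' N" "set_mset W \<subseteq> BL" "image_mset proj W = N"
  shows "\<exists>W'. set_mset W' \<subseteq> BL \<and> image_mset proj W' = N' \<and> sum_mset W' = sum_mset W"
proof -
  obtain T u1 u2 v1 v2 where ds: "double_swap (bases P) u1 u2 v1 v2"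
    and N': "N' = T + {#u1, u2#}" and N: "N = T + {#v1, v2#}"
    using assms(1) unfolding swap_move_def by blast
  obtain i j where ij: "lookup u2 i < lookup u1 i" "lookup u1 j < lookup u2 j"
    "v1 + unit_vec i = u1 + unit_vec j" "v2 + unit_vec j = u2 + unit_vec i"
    and u: "u1 \<in> bases P" "u2 \<in> bases P"
    using ds unfolding double_swap_def by blast
  obtain x1 x2 W0 where W: "W = W0 + {#x1, x2#}" "proj x1 = v1" "proj x2 = v2" "image_mset proj W0 = T"
    using image_mset_eq_add_two[of proj W T v1 v2] assms(3) N by blast
  have x: "x1 \<in> BL" "x2 \<in> BL" "set_mset W0 \<subseteq> BL" using assms(2) W(1) by auto
  have "i \<noteq> j" using ij(1,2) by auto
  then have "0 < lookup (proj x1) j" "0 < lookup (proj x2) i"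
    using arg_cong[OF ij(3), of "\<lambda>v. lookup v j"] arg_cong[OF ij(4), of "\<lambda>v. lookup v i"] W(2,3)
    by (auto simp: lookup_add lookup_unit_vec)
  then obtain a b where a: "(i, a) \<in> G" "0 < lookup x2 (i, a)"
    and b: "(j, b) \<in> G" "0 < lookup x1 (j, b)"
    using exists_less_in_block[of x1 0 j] exists_less_in_block[of x2 0 i] x lift_bases_iff
    by (auto simp: lookup_block_proj)
  define z1 z2 where "z1 = move_unit x1 (j, b) (i, a)" and "z2 = move_unit x2 (i, a) (j, b)"
  have z: "z1 \<in> BL" "proj z1 = u1" "z2 \<in> BL" "proj z2 = u2"
    using move_unit_in_lift_bases[OF x(1) b(1) a(1) _ u(1)]
      move_unit_in_lift_bases[OF x(2) a(1) b(1) _ u(2)]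
      a(2) b(2) ij(3,4) W(2,3) unfolding z1_def z2_def by (auto simp: Suc_le_eq)
  have "z1 + z2 = x1 + x2"
    unfolding z1_def z2_def using a(2) b(2) by (intro move_unit_add_move_unit) simp_all
  then show ?thesis using x(3) z W(4) N'
    by (intro exI[of _ "W0 + {#z1, z2#}"]) (auto simp: W(1) simp flip: add.assoc)
qed

lemma lift_swap_equiv:
  assumes "equivclp (swap_move (bases P)) N N'" "set_mset W \<subseteq> BL" "image_mset proj W = N"
  shows "\<exists>W'. set_mset W' \<subseteq> BL \<and> image_mset proj W' = N' \<and> equivclp (swap_move BL) W W'"
  using assms(1)
proof (induction rule: equivclp_induct)
  case base
  then show ?case using assms(2,3) by (intro exI[of _ W]) simp

next
  case (step N1 N2)
  then obtain W1 where W1: "set_mset W1 \<subseteq> BL" "image_mset proj W1 = N1" "equivclp (swap_move BL) W W1"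
    by blast
  from step.hyps(2) show ?case
  proof
    assume "swap_move (bases P) N1 N2"
    then obtain W2 where W2: "set_mset W2 \<subseteq> BL" "image_mset proj W2 = N2" "swap_move BL W1 W2"
      using lift_swap_move W1(1,2) by blast
    have "equivclp (swap_move BL) W W2"
      by (rule equivclp_into_equivclp[OF W1(3)]) (use W2(3) in blast)
    then show ?thesis using W2(1,2) by blast
  next
    assume N21: "swap_move (bases P) N2 N1"
    obtain W2 where W2: "set_mset W2 \<subseteq> BL" "image_mset proj W2 = N2" "sum_mset W2 = sum_mset W1"
      using lift_reverse_swap_move[OF N21 W1(1,2)] by blast
    obtain W3 where W3: "set_mset W3 \<subseteq> BL" "image_mset proj W3 = N1" "swap_move BL W2 W3"
      using lift_swap_move[OF N21 W2(1,2)] by blast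
    have "image_mset proj W1 = image_mset proj W3" using W1(2) W3(2) by simp
    moreover have "sum_mset W1 = sum_mset W3" using W2(3) swap_move_sum_mset[OF W3(3)] by simp
    ultimately have "equivclp (swap_move BL) W1 W3" by (rule fibre_swap_equiv[OF W1(1) W3(1)])
    then have "equivclp (swap_move BL) W1 W2"
      by (rule equivclp_into_equivclp) (use W3(3) in blast)
    then have "equivclp (swap_move BL) W W2" by (rule equivclp_trans[OF W1(3)])
    then show ?thesis using W2(1,2) by blast
  qed
qed

lemma swap_connected_lift_bases:
  assumes "swap_connected (bases P)"
  shows "swap_connected BL"
  unfolding swap_connected_def
proof (intro allI impI)
  fix W W' assume W: "set_mset W \<subseteq> BL" and W': "set_mset W' \<subseteq> BL" and sums: "sum_mset W = sum_mset W'"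
  have "set_mset (image_mset proj W) \<subseteq> bases P" "set_mset (image_mset proj W') \<subseteq> bases P"
    using W W' lift_bases_iff by auto
  moreover have "sum_mset (image_mset proj W) = sum_mset (image_mset proj W')"
    using sums by (simp flip: block_proj_sum_mset)
  ultimately have "equivclp (swap_move (bases P)) (image_mset proj W) (image_mset proj W')"
    using assms unfolding swap_connected_def by blast
  then obtain W'' where W'': "set_mset W'' \<subseteq> BL" "image_mset proj W'' = image_mset proj W'"
      "equivclp (swap_move BL) W W''"
    using lift_swap_equiv W by blast
  have "equivclp (swap_move BL) W'' W'"
    using fibre_swap_equiv[OF W''(1) W' W''(2)] equivclp_swap_move_sum_mset[OF W''(3)] sums by simp
  with W''(3) show "equivclp (swap_move BL) W W'" by (rule equivclp_trans)
qed

end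

theorem theorem2p4:
  fixes n :: nat and \<alpha> :: "nat \<Rightarrow> nat" and P :: "(nat \<Rightarrow>\<^sub>0 nat) set"
    and K :: "'k::field itself"
  assumes "\<forall>i\<in>{1..n}. \<alpha> i \<ge> 1"
    and "discrete_polymatroid {1..n} P"
    and "generated_by_double_swaps (bases P) K"
  shows "generated_by_double_swaps (lift_bases n \<alpha> P) K"
proof -
  interpret polymatroid_lifting n P \<alpha> by unfold_locales (rule finite_atLeastAtMost, rule assms(2))
  have "swap_connected (bases P)"
    using assms(3) by (simp add: generated_by_double_swaps_iff_swap_connected)
  then have "swap_connected (lift_bases n \<alpha> P)" by (rule swap_connected_lift_bases)
  then show ?thesis by (simp add: generated_by_double_swaps_iff_swap_connected)
qed

end
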